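(* Let $\mathcal{P}$ be a bounded distribution (as defined in the context) and let $\bm{\pi}_{\mathrm{bounded}}$ be the online policy (Algorithm 1) described in the context, run with parameter $C=9$. Then $\bm{\pi}_{\mathrm{bounded}}$ is a feasible online policy and $$\mathrm{Regret}_{\mathcal{P}}(\bm{\pi}_{\mathrm{bounded}})=\widetilde{\mathcal{O}}(\sqrt{T}),$$ i.e., the regret is at most $\sqrt{T}$ times a factor polylogarithmic in $T$, with constants that do not depend on $T$.
   Context: Online linear programming with replenishment. There are $m$ resources and a horizon $T$. Tuples $(r_t,\bm{a}_t,\bm{b}_t)\in\mathbb{R}\times\mathbb{R}^m\times\mathbb{R}^m_{\geq 0}$, $t=1,\dots,T$, are drawn i.i.d. from an unknown distribution $\mathcal{P}$. Inventory of every resource starts at $0$. In period $t$ each resource $j$ is first replenished by $b_{jt}$; then the order $(r_t,\bm{a}_t)$ is revealed and the decision maker chooses $x_t\in\{0,1\}$ (possibly at random) based only on $(r_k,\bm{a}_k,\bm{b}_k,x_k)_{k<t}$ and $(r_t,\bm{a}_t,\bm{b}_t)$; accepting earns $r_t$ and consumes $\bm{a}_t$ (negative entries mean restocking). A policy is feasible if for every realization, $\sum_{k=1}^t a_{jk}x_k\le\sum_{k=1}^t b_{jk}$ for all $j\in[m]$, $t\in[T]$. The hindsight optimum $R^*$ is the maximum of $\sum_{t=1}^T r_tx_t$ over $\bm{x}\in\{0,1\}^T$ subject to these prefix constraints, and $\mathrm{Regret}_{\mathcal{P}}(\bm{\pi})=\mathbb{E}_{\mathcal{P}}[R^*-\sum_{t=1}^T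 r_tx_t]$ where $x_t$ are the decisions of $\bm{\pi}$. Bounded distribution: there are constants $\bar r,\bar a,\bar b>0$ with $|r|<\bar r$, $\|\bm{a}\|_2<\bar a$, $\|\bm{b}\|_\infty<\bar b$ almost surely, and $\underline{b}>0$ with $\mathbb{E}[b_j]>\underline{b}$ for all $j\in[m]$. Algorithm 1 (inputs $\bar r,\bar a,\bar b,\underline b,T$, and a parameter $C>0$): set $W=2+\left\lceil\max\left(\frac{8\sqrt m\bar r}{\underline b},\frac{24\sqrt m(\bar b+\bar a)\bar b^2}{\underline b^2},\frac{\bar r+2m(\bar b^2+\bar a^2)}{\sqrt m(\bar b+\bar a)}\right)\right\rceil$ and $\kappa=\lceil 4W\sqrt{CT\ln T}/\underline b\rceil$. Initialize $p^1_j=0$, $\ell_{j,1}=0$ for all $j$. For $t=1,\dots,T$: observe $(r_t,\bm a_t,\bm b_t)$. If $t\le\kappa$, set $x_t=0$ and $p^{t+1}_j=0$ for all $j$. Otherwise set $x_t=\mathbb{I}(\forall j\in[m],\ \ell_{j,t}\ge a_{jt})\cdot\mathbb{I}(r_t>\langle\bm p^t,\bm a_t\rangle)$ and $p^{t+1}_j=\left[p^t_j-\frac{1}{\sqrt{CT\ln T}}\left(b_{jt}-a_{jt}\mathbb{I}(r_t>\langle\bm p^t,\bm a_t\rangle)\right)\right]^+$ for all $j$. Finally set $\ell_{j,t+1}=\ell_{j,t}+b_{jt}-a_{jt}x_t$ for all $j$. Here $[y]^+=\max(y,0)$. *)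

theory Defs
  imports "HOL-Probability.Probability"
begin

text \<open>A sample (one period) is a triple (r, a, b) with r real, a, b in R^m.
  The resource index type is 'm (finite), so m = CARD('m).\<close>

type_synonym 'm sample = "real \<times> (real ^ 'm) \<times> (real ^ 'm)"

definition rew :: "'m sample \<Rightarrow> real" where "rew z = fst z"
definition cons :: "'m sample \<Rightarrow> real ^ 'm" where "cons z = fst (snd z)"
definition repl :: "'m sample \<Rightarrow> real ^ 'm" where "repl z = snd (snd z)"

definition alg_W :: "nat \<Rightarrow> real \<Rightarrow> real \<Rightarrow> real \<Rightarrow> real \<Rightarrow> real" where
  "alg_W m rb ab bb bl = 2 + real_of_int (ceiling (max (8 * sqrt m * rb / bl)
      (max (24 * sqrt m * (bb + ab) * bb ^ 2 / bl ^ 2)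
           ((rb + 2 * m * (bb ^ 2 + ab ^ 2)) / (sqrt m * (bb + ab))))))"

definition alg_kappa :: "nat \<Rightarrow> real \<Rightarrow> real \<Rightarrow> real \<Rightarrow> real \<Rightarrow> real \<Rightarrow> nat \<Rightarrow> int" where
  "alg_kappa m rb ab bb bl C T =
     ceiling (4 * alg_W m rb ab bb bl * sqrt (C * T * ln T) / bl)"

text \<open>Decision x_t in period t (1-based), given the state (p^t, l_t) and the sample of period t.\<close>
definition alg_dec :: "real \<Rightarrow> real \<Rightarrow> real \<Rightarrow> real \<Rightarrow> real \<Rightarrow> nat \<Rightarrow> nat \<Rightarrow>
    (real ^ ('m::finite)) \<times> (real ^ 'm) \<Rightarrow> 'm sample \<Rightarrow> real" where
  "alg_dec rb ab bb bl C T t st z =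
     (if int t \<le> alg_kappa CARD('m) rb ab bb bl C T then 0
      else if (\<forall>j. snd st $ j \<ge> cons z $ j) \<and> rew z > inner (fst st) (cons z) then 1 else 0)"

definition alg_step :: "real \<Rightarrow> real \<Rightarrow> real \<Rightarrow> real \<Rightarrow> real \<Rightarrow> nat \<Rightarrow> nat \<Rightarrow>
    (real ^ ('m::finite)) \<times> (real ^ 'm) \<Rightarrow> 'm sample \<Rightarrow> (real ^ 'm) \<times> (real ^ 'm)" where
  "alg_step rb ab bb bl C T t st z =
     (let x = alg_dec rb ab bb bl C T t st z;
          p' = (if int t \<le> alg_kappa CARD('m) rb ab bb bl C T then 0
                else (\<chi> j. max 0 (fst st $ j - (1 / sqrt (C * T * ln T)) *
                        (repl z $ j - cons z $ j *
                           (if rew z > inner (fst st) (cons z) then 1 else 0)))));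
          l' = snd st + repl z - x *\<^sub>R cons z
      in (p', l'))"

text \<open>State (p^{t+1}, l_{t+1}) after the first t periods; the sample of period k is omega k
  (k = 1, ..., T; omega 0 is unused).\<close>
primrec alg_state :: "real \<Rightarrow> real \<Rightarrow> real \<Rightarrow> real \<Rightarrow> real \<Rightarrow> nat \<Rightarrow> nat \<Rightarrow>
    (nat \<Rightarrow> ('m::finite) sample) \<Rightarrow> (real ^ 'm) \<times> (real ^ 'm)" where
  "alg_state rb ab bb bl C T 0 \<omega> = (0, 0)"
| "alg_state rb ab bb bl C T (Suc t) \<omega> =
     alg_step rb ab bb bl C T (Suc t) (alg_state rb ab bb bl C T t \<omega>) (\<omega> (Suc t))"

definition alg_x :: "real \<Rightarrow> real \<Rightarrow> real \<Rightarrow> real \<Rightarrow> real \<Rightarrow> nat \<Rightarrow>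
    (nat \<Rightarrow> ('m::finite) sample) \<Rightarrow> nat \<Rightarrow> real" where
  "alg_x rb ab bb bl C T \<omega> t =
     alg_dec rb ab bb bl C T t (alg_state rb ab bb bl C T (t - 1) \<omega>) (\<omega> t)"

definition prefix_feasible :: "nat \<Rightarrow> (nat \<Rightarrow> ('m::finite) sample) \<Rightarrow> (nat \<Rightarrow> real) \<Rightarrow> bool" where
  "prefix_feasible T \<omega> x \<longleftrightarrow>
     (\<forall>j. \<forall>t\<in>{1..T}. (\<Sum>k=1..t. cons (\<omega> k) $ j * x k) \<le> (\<Sum>k=1..t. repl (\<omega> k) $ j))"

definition hindsight_opt :: "nat \<Rightarrow> (nat \<Rightarrow> ('m::finite) sample) \<Rightarrow> real" where
  "hindsight_opt T \<omega> = Max {(\<Sum>k\<in>S. rew (\<omega> k)) | S. S \<subseteq> {1..T} \<and>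
       prefix_feasible T \<omega> (\<lambda>k. if k \<in> S then 1 else 0)}"

definition alg_reward :: "real \<Rightarrow> real \<Rightarrow> real \<Rightarrow> real \<Rightarrow> real \<Rightarrow> nat \<Rightarrow>
    (nat \<Rightarrow> ('m::finite) sample) \<Rightarrow> real" where
  "alg_reward rb ab bb bl C T \<omega> = (\<Sum>t=1..T. rew (\<omega> t) * alg_x rb ab bb bl C T \<omega> t)"

definition bounded_dist :: "('m::finite) sample measure \<Rightarrow> real \<Rightarrow> real \<Rightarrow> real \<Rightarrow> real \<Rightarrow> bool" where
  "bounded_dist M rb ab bb bl \<longleftrightarrow>
     prob_space M \<and> sets M = sets borel \<and>
     (AE z in M. \<bar>rew z\<bar> < rb \<and> norm (cons z) < ab \<and>
                 (\<forall>j. \<bar>repl z $ j\<bar> < bb) \<and> (\<forall>j. repl z $ j \<ge> 0)) \<and>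
     (\<forall>j. (\<integral>z. repl z $ j \<partial>M) > bl)"

end

theory Submission
  imports Defs "HOL-Real_Asymp.Real_Asymp"
begin

text \<open>
  After the warm-up, the prices of Algorithm 1 perform projected stochastic subgradient descent
  with step \<open>eta = 1/sqrt (9 T ln T)\<close> on the dual function
  \<open>g q = E [max 0 (r - q \<bullet> a) + q \<bullet> b]\<close> over \<open>q \<ge> 0\<close>. By weak duality the hindsight optimum has
  expectation at most \<open>T * min g\<close>. The price-based decision \<open>x\<^sub>t = [r\<^sub>t > p\<^sup>t \<bullet> a\<^sub>t]\<close> earns
  \<open>g\<^sub>t(p\<^sup>t) - p\<^sup>t \<bullet> (b\<^sub>t - x\<^sub>t a\<^sub>t)\<close>; the potential \<open>\<parallel>p\<parallel>\<^sup>2\<close> bounds the sum of the inner products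
  by \<open>eta T D\<^sup>2 / 2 = O(sqrt T)\<close>, and \<open>E g\<^sub>t(p\<^sup>t) \<ge> min g\<close> because \<open>p\<^sup>t\<close> depends only on the past.

  It remains to see that the inventory never blocks a price-based acceptance. The warm-up of
  length \<open>\<kappa> = O(sqrt (T log T))\<close> stocks about \<open>\<kappa> b/2\<close> of every resource, and afterwards the
  stock equals this minus \<open>p/eta\<close>. If every window of \<open>L = O(log T)\<close> periods is replenished at
  rate \<open>b/2\<close>, a price above a constant level decreases the potential over the next window, so the
  prices stay bounded and the stock never falls below \<open>\<parallel>a\<parallel>\<close>. By Hoeffding's inequality this
  fails with probability \<open>O(1/T\<^sup>2)\<close>, and the warm-up itself costs \<open>\<kappa> r = O(sqrt (T log T))\<close>.
\<close>

lemma norm_vec_max_zero_le: "norm (\<chi> j. max 0 (y $ j)) \<le> norm (y :: real^'n::finite)"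
  by (rule norm_le_componentwise_cart) auto

lemma norm_vec_sq_le:
  fixes x :: "real^'n::finite"
  assumes "\<And>j. \<bar>x $ j\<bar> \<le> c"
  shows "(norm x)\<^sup>2 \<le> real CARD('n) * c\<^sup>2"
proof -
  have "(norm x)\<^sup>2 = (\<Sum>j\<in>UNIV. (x $ j)\<^sup>2)"
    unfolding power2_norm_eq_inner inner_vec_def by (simp add: power2_eq_square)
  also have "\<dots> \<le> (\<Sum>j\<in>(UNIV::'n set). c\<^sup>2)"
    using assms by (intro sum_mono) (meson abs_ge_zero order.trans power2_le_iff_abs_le)
  finally show ?thesis
    by simp
qed

lemma vec_component_mult_le_inner:
  fixes x y :: "real^'n::finite"
  assumes "\<And>i. 0 \<le> x $ i" "\<And>i. 0 \<le> y $ i"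
  shows "x $ j * y $ j \<le> x \<bullet> y"
  unfolding inner_vec_def inner_real_def by (rule member_le_sum) (auto intro: assms mult_nonneg_nonneg)

section \<open>Weak duality for the hindsight problem\<close>

definition dual_fun :: "('m::finite) sample \<Rightarrow> real^'m \<Rightarrow> real" where
  "dual_fun z q = max 0 (rew z - q \<bullet> cons z) + q \<bullet> repl z"

lemma dual_fun_nonneg:
  assumes "\<And>j. 0 \<le> q $ j" "\<And>j. 0 \<le> repl z $ j"
  shows "0 \<le> dual_fun z q"
  unfolding dual_fun_def inner_vec_def inner_real_def
  by (intro add_nonneg_nonneg max.cobounded1 sum_nonneg mult_nonneg_nonneg assms)

lemma abs_inner_le_sum_abs:
  fixes q a :: "real^'n::finite"
  assumes "\<And>j. \<bar>a $ j\<bar> \<le> c"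
  shows "\<bar>q \<bullet> a\<bar> \<le> (\<Sum>j\<in>UNIV. \<bar>q $ j\<bar>) * c"
proof -
  have "\<bar>q \<bullet> a\<bar> \<le> (\<Sum>j\<in>UNIV. \<bar>q $ j * a $ j\<bar>)"
    unfolding inner_vec_def inner_real_def by (rule sum_abs)
  also have "\<dots> = (\<Sum>j\<in>UNIV. \<bar>q $ j\<bar> * \<bar>a $ j\<bar>)"
    by (simp add: abs_mult)
  also have "\<dots> \<le> (\<Sum>j\<in>UNIV. \<bar>q $ j\<bar> * c)"
    using assms by (intro sum_mono mult_left_mono) auto
  finally show ?thesis
    by (simp add: sum_distrib_right)
qed

lemma abs_dual_fun_le:
  assumes "\<bar>rew z\<bar> \<le> rb" "\<And>j. \<bar>cons z $ j\<bar> \<le> ab" "\<And>j. \<bar>repl z $ j\<bar> \<le> bb"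
  shows "\<bar>dual_fun z q\<bar> \<le> rb + (\<Sum>j\<in>UNIV. \<bar>q $ j\<bar>) * (ab + bb)"
proof -
  have "\<bar>dual_fun z q\<bar> \<le> \<bar>rew z\<bar> + \<bar>q \<bullet> cons z\<bar> + \<bar>q \<bullet> repl z\<bar>"
    unfolding dual_fun_def by (auto simp: max_def abs_le_iff)
  then show ?thesis
    using assms(1) abs_inner_le_sum_abs[of "cons z" ab q, OF assms(2)]
      abs_inner_le_sum_abs[of "repl z" bb q, OF assms(3)]
    by (simp add: distrib_left)
qed

lemma hindsight_opt_attained:
  fixes \<omega> :: "nat \<Rightarrow> ('m::finite) sample"
  assumes "\<forall>t\<in>{1..T}. \<forall>j. 0 \<le> repl (\<omega> t) $ j"
  obtains S where "S \<subseteq> {1..T}" "prefix_feasible T \<omega> (\<lambda>k. if k \<in> S then 1 else 0)"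
    "hindsight_opt T \<omega> = (\<Sum>k\<in>S. rew (\<omega> k))"
proof -
  let ?H = "{(\<Sum>k\<in>S. rew (\<omega> k)) | S. S \<subseteq> {1..T} \<and>
       prefix_feasible T \<omega> (\<lambda>k. if k \<in> S then 1 else 0)}"
  have "?H \<subseteq> (\<lambda>S. \<Sum>k\<in>S. rew (\<omega> k)) ` Pow {1..T}"
    by auto
  then have "finite ?H"
    by (rule finite_subset) simp
  have "prefix_feasible T \<omega> (\<lambda>k. if k \<in> {} then 1 else 0)"
    using assms by (auto simp: prefix_feasible_def intro!: sum_nonneg)
  then have "0 \<in> ?H"
    by force
  with \<open>finite ?H\<close> have "Max ?H \<in> ?H"
    by (intro Max_in) auto
  with that show thesis
    unfolding hindsight_opt_def by blast
qed

lemma consumption_le_replenishment: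
  assumes "S \<subseteq> {1..T}" "prefix_feasible T \<omega> (\<lambda>k. if k \<in> S then 1 else 0)"
  shows "(\<Sum>k\<in>S. cons (\<omega> k) $ j) \<le> (\<Sum>k=1..T. repl (\<omega> k) $ j)"
proof (cases "T = 0")
  case False
  have "(\<Sum>k\<in>S. cons (\<omega> k) $ j) = (\<Sum>k=1..T. if k \<in> S then cons (\<omega> k) $ j else 0)"
    using sum.inter_restrict[of "{1..T}" "\<lambda>k. cons (\<omega> k) $ j" S] assms(1) by (simp add: Int_absorb1)
  also have "\<dots> = (\<Sum>k=1..T. cons (\<omega> k) $ j * (if k \<in> S then 1 else 0))"
    by (rule sum.cong) auto
  also have "\<dots> \<le> (\<Sum>k=1..T. repl (\<omega> k) $ j)"
    using assms(2) False unfolding prefix_feasible_def by simp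
  finally show ?thesis .
qed (use assms in simp)

lemma hindsight_opt_le_dual:
  fixes \<omega> :: "nat \<Rightarrow> ('m::finite) sample"
  assumes "\<forall>t\<in>{1..T}. \<forall>j. 0 \<le> repl (\<omega> t) $ j" and q: "\<forall>j. 0 \<le> q $ j"
  shows "hindsight_opt T \<omega> \<le> (\<Sum>t=1..T. dual_fun (\<omega> t) q)"
proof -
  obtain S where S: "S \<subseteq> {1..T}" "prefix_feasible T \<omega> (\<lambda>k. if k \<in> S then 1 else 0)"
    and opt: "hindsight_opt T \<omega> = (\<Sum>k\<in>S. rew (\<omega> k))"
    using hindsight_opt_attained[OF assms(1)] by blast
  have "hindsight_opt T \<omega> = (\<Sum>k\<in>S. rew (\<omega> k) - q \<bullet> cons (\<omega> k)) + q \<bullet> (\<Sum>k\<in>S. cons (\<omega> k))"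
    unfolding opt by (simp add: sum_subtractf inner_sum_right)
  also have "(\<Sum>k\<in>S. rew (\<omega> k) - q \<bullet> cons (\<omega> k)) \<le> (\<Sum>k=1..T. max 0 (rew (\<omega> k) - q \<bullet> cons (\<omega> k)))"
    using S(1) by (intro order.trans[OF sum_mono sum_mono2]) auto
  also have "q \<bullet> (\<Sum>k\<in>S. cons (\<omega> k)) \<le> q \<bullet> (\<Sum>k=1..T. repl (\<omega> k))"
    unfolding inner_vec_def using q consumption_le_replenishment[OF S]
    by (auto simp: sum_component intro!: sum_mono mult_left_mono)
  finally show ?thesis
    by (simp add: dual_fun_def sum.distrib inner_sum_right)
qed

lemma abs_hindsight_opt_le:
  fixes \<omega> :: "nat \<Rightarrow> ('m::finite) sample"
  assumes "\<forall>t\<in>{1..T}. (\<forall>j. 0 \<le> repl (\<omega> t) $ j) \<and> \<bar>rew (\<omega> t)\<bar> \<le> rb"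
  shows "\<bar>hindsight_opt T \<omega>\<bar> \<le> real T * rb"
proof -
  have "\<forall>t\<in>{1..T}. \<forall>j. 0 \<le> repl (\<omega> t) $ j"
    using assms by blast
  then obtain S where S: "S \<subseteq> {1..T}" and opt: "hindsight_opt T \<omega> = (\<Sum>k\<in>S. rew (\<omega> k))"
    by (rule hindsight_opt_attained)
  have "\<bar>hindsight_opt T \<omega>\<bar> \<le> (\<Sum>k\<in>S. \<bar>rew (\<omega> k)\<bar>)"
    unfolding opt by (rule sum_abs)
  also have "\<dots> \<le> (\<Sum>k\<in>{1..T}. \<bar>rew (\<omega> k)\<bar>)"
    using S by (intro sum_mono2) auto
  also have "\<dots> \<le> (\<Sum>k\<in>{1..T}. rb)"
    using assms by (intro sum_mono) blast
  finally show ?thesis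
    by simp
qed

section \<open>The policy as a deterministic function of the sample path\<close>

text \<open>Unfolding the state recursion blows up goals; \<open>price_Suc\<close> and \<open>stock_Suc\<close> are used instead.\<close>

declare alg_state.simps(2) [simp del]

locale online_policy =
  fixes rb ab bb bl :: real and T :: nat and mty :: "'m::finite itself"
begin

definition warmup :: nat where
  "warmup = nat (alg_kappa CARD('m) rb ab bb bl 9 T)"

definition eta :: real where
  "eta = 1 / sqrt (9 * real T * ln (real T))"

text \<open>\<open>price \<omega> t\<close> and \<open>stock \<omega> t\<close> are the paper's \<open>p\<^sup>t\<^sup>+\<^sup>1\<close> and \<open>\<ell>\<^sub>t\<^sub>+\<^sub>1\<close>,
  the state after period \<open>t\<close>.\<close>

abbreviation price :: "(nat \<Rightarrow> 'm sample) \<Rightarrow> nat \<Rightarrow> real^'m" where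
  "price \<omega> t \<equiv> fst (alg_state rb ab bb bl 9 T t \<omega>)"

abbreviation stock :: "(nat \<Rightarrow> 'm sample) \<Rightarrow> nat \<Rightarrow> real^'m" where
  "stock \<omega> t \<equiv> snd (alg_state rb ab bb bl 9 T t \<omega>)"

abbreviation dec :: "(nat \<Rightarrow> 'm sample) \<Rightarrow> nat \<Rightarrow> real" where
  "dec \<omega> t \<equiv> alg_x rb ab bb bl 9 T \<omega> t"

text \<open>The price update of Algorithm 1 uses the price-based decision \<open>dual_dec\<close>, not the actual
  decision \<open>dec\<close>, which also requires enough stock.\<close>

definition dual_dec :: "(nat \<Rightarrow> 'm sample) \<Rightarrow> nat \<Rightarrow> real" where
  "dual_dec \<omega> t = (if rew (\<omega> t) > price \<omega> (t - 1) \<bullet> cons (\<omega> t) then 1 else 0)"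

definition subgrad :: "(nat \<Rightarrow> 'm sample) \<Rightarrow> nat \<Rightarrow> real^'m" where
  "subgrad \<omega> t = repl (\<omega> t) - dual_dec \<omega> t *\<^sub>R cons (\<omega> t)"

definition grad_bound :: real where
  "grad_bound = real CARD('m) * (bb + ab)\<^sup>2"

lemma in_warmup_iff: "0 < t \<Longrightarrow> int t \<le> alg_kappa CARD('m) rb ab bb bl 9 T \<longleftrightarrow> t \<le> warmup"
  unfolding warmup_def by linarith

lemma dec_warmup: "0 < t \<Longrightarrow> t \<le> warmup \<Longrightarrow> dec \<omega> t = 0"
  by (simp add: alg_x_def alg_dec_def in_warmup_iff)

lemma dec_after_warmup:
  "warmup < t \<Longrightarrow>
    dec \<omega> t = (if \<forall>j. cons (\<omega> t) $ j \<le> stock \<omega> (t - 1) $ j then dual_dec \<omega> t else 0)"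
  by (simp add: alg_x_def alg_dec_def dual_dec_def in_warmup_iff)

lemma dec_01: "dec \<omega> t \<in> {0, 1}"
  by (simp add: alg_x_def alg_dec_def)

lemma dual_dec_01: "dual_dec \<omega> t \<in> {0, 1}"
  by (simp add: dual_dec_def)

lemma dec_le_dual_dec: "warmup < t \<Longrightarrow> dec \<omega> t \<le> dual_dec \<omega> t"
  using dual_dec_01[of \<omega> t] by (auto simp: dec_after_warmup)

lemma stock_Suc: "stock \<omega> (Suc t) = stock \<omega> t + repl (\<omega> (Suc t)) - dec \<omega> (Suc t) *\<^sub>R cons (\<omega> (Suc t))"
  by (simp add: alg_state.simps alg_step_def Let_def alg_x_def)

lemma price_warmup: "t \<le> warmup \<Longrightarrow> price \<omega> t = 0"
  by (cases t) (simp_all add: alg_state.simps alg_step_def Let_def in_warmup_iff[symmetric])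

lemma price_Suc:
  "warmup < Suc t \<Longrightarrow>
    price \<omega> (Suc t) = (\<chi> j. max 0 ((price \<omega> t - eta *\<^sub>R subgrad \<omega> (Suc t)) $ j))"
  using in_warmup_iff[of "Suc t"]
  by (simp add: alg_state.simps alg_step_def Let_def eta_def subgrad_def dual_dec_def)

lemma price_nonneg: "0 \<le> price \<omega> t $ j"
proof (cases "t \<le> warmup")
  case False
  then obtain s where "t = Suc s" "warmup < Suc s"
    by (cases t) auto
  then show ?thesis
    by (simp add: price_Suc)
qed (simp add: price_warmup)

lemma stock_eq_sum: "stock \<omega> t = (\<Sum>k=1..t. repl (\<omega> k) - dec \<omega> k *\<^sub>R cons (\<omega> k))"
  by (induction t) (simp_all only: stock_Suc sum.nat_ivl_Suc', simp_all)

lemma stock_nonneg: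
  assumes "\<And>k j. 0 \<le> repl (\<omega> k) $ j"
  shows "0 \<le> stock \<omega> t $ j"
proof (induction t)
  case (Suc t)
  have "cons (\<omega> (Suc t)) $ j \<le> stock \<omega> t $ j" if accepted: "dec \<omega> (Suc t) = 1"
  proof -
    have "warmup < Suc t"
      using accepted dec_warmup[of "Suc t" \<omega>] by linarith
    from dec_after_warmup[OF this, of \<omega>] accepted show ?thesis
      by (metis diff_Suc_1 zero_neq_one)
  qed
  moreover have "stock \<omega> (Suc t) $ j =
      stock \<omega> t $ j + repl (\<omega> (Suc t)) $ j - dec \<omega> (Suc t) * cons (\<omega> (Suc t)) $ j"
    unfolding stock_Suc by simp
  moreover have "dec \<omega> (Suc t) = 0 \<or> dec \<omega> (Suc t) = 1"
    using dec_01[of \<omega> "Suc t"] by simp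
  ultimately show ?case
    using Suc.IH assms[of "Suc t" j] by auto
qed simp

lemma prefix_feasible_dec:
  assumes "\<And>k j. 0 \<le> repl (\<omega> k) $ j"
  shows "prefix_feasible T \<omega> (dec \<omega>)"
  unfolding prefix_feasible_def
proof (intro allI ballI)
  fix j t
  have "0 \<le> stock \<omega> t $ j"
    by (rule stock_nonneg[OF assms])
  also have "stock \<omega> t $ j = (\<Sum>k=1..t. repl (\<omega> k) $ j - cons (\<omega> k) $ j * dec \<omega> k)"
    unfolding stock_eq_sum by (simp add: sum_component mult.commute)
  finally show "(\<Sum>k=1..t. cons (\<omega> k) $ j * dec \<omega> k) \<le> (\<Sum>k=1..t. repl (\<omega> k) $ j)"
    by (simp add: sum_subtractf)
qed

lemma state_causal: "(\<forall>k\<le>t. \<omega> k = \<omega>' k) \<Longrightarrow> alg_state rb ab bb bl 9 T t \<omega> = alg_state rb ab bb bl 9 T t \<omega>'"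
  by (induction t) (auto simp: alg_state.simps)

lemma dec_causal: "(\<forall>k\<le>t. \<omega> k = \<omega>' k) \<Longrightarrow> dec \<omega> t = dec \<omega>' t"
  unfolding alg_x_def using state_causal[of "t - 1" \<omega> \<omega>'] by auto

lemma reward_dual_dec:
  "rew (\<omega> t) * dual_dec \<omega> t = dual_fun (\<omega> t) (price \<omega> (t - 1)) - price \<omega> (t - 1) \<bullet> subgrad \<omega> t"
  by (auto simp: dual_fun_def subgrad_def dual_dec_def inner_diff_right)

lemma price_ge_neg_subgrad_sum:
  "warmup \<le> s \<Longrightarrow> - eta * (\<Sum>t\<in>{warmup<..s}. subgrad \<omega> t $ j) \<le> price \<omega> s $ j"
proof (induction s rule: dec_induct)
  case (step s)
  have "{warmup<..Suc s} = insert (Suc s) {warmup<..s}"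
    using step by auto
  then show ?case
    using step price_Suc[of s \<omega>] by (simp add: algebra_simps)
qed (simp add: price_warmup)

end

section \<open>Price dynamics on bounded sample paths\<close>

definition bounded_sample :: "real \<Rightarrow> real \<Rightarrow> real \<Rightarrow> ('m::finite) sample \<Rightarrow> bool" where
  "bounded_sample rb ab bb z \<longleftrightarrow>
     \<bar>rew z\<bar> < rb \<and> norm (cons z) < ab \<and> (\<forall>j. \<bar>repl z $ j\<bar> < bb) \<and> (\<forall>j. 0 \<le> repl z $ j)"

locale bounded_policy = online_policy rb ab bb bl T mty
  for rb ab bb bl :: real and T :: nat and mty :: "'m::finite itself" +
  assumes rb_pos: "0 < rb" and ab_pos: "0 < ab" and bb_pos: "0 < bb" and bl_pos: "0 < bl"
    and horizon: "2 \<le> T"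
begin

abbreviation bounded_path :: "(nat \<Rightarrow> 'm sample) \<Rightarrow> bool" where
  "bounded_path \<omega> \<equiv> \<forall>t\<in>{1..T}. bounded_sample rb ab bb (\<omega> t)"

lemma bounded_pathD:
  assumes "bounded_path \<omega>" "t \<in> {1..T}"
  shows "\<bar>rew (\<omega> t)\<bar> < rb" "\<bar>cons (\<omega> t) $ j\<bar> < ab" "\<bar>repl (\<omega> t) $ j\<bar> < bb"
    "0 \<le> repl (\<omega> t) $ j"
proof -
  have "bounded_sample rb ab bb (\<omega> t)"
    using assms by blast
  then show "\<bar>rew (\<omega> t)\<bar> < rb" "\<bar>cons (\<omega> t) $ j\<bar> < ab" "\<bar>repl (\<omega> t) $ j\<bar> < bb"
    "0 \<le> repl (\<omega> t) $ j"
    using component_le_norm_cart[of "cons (\<omega> t)" j] by (auto simp: bounded_sample_def)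
qed

lemma grad_bound_nonneg: "0 \<le> grad_bound"
  by (simp add: grad_bound_def)

lemma eta_pos: "0 < eta"
  using horizon by (simp add: eta_def)

lemma abs_subgrad_le: "bounded_path \<omega> \<Longrightarrow> t \<in> {1..T} \<Longrightarrow> \<bar>subgrad \<omega> t $ j\<bar> \<le> bb + ab"
  using bounded_pathD(2,3)[of \<omega> t j] dual_dec_01[of \<omega> t] by (auto simp: subgrad_def)

lemma norm_subgrad_sq_le:
  assumes "bounded_path \<omega>" "t \<in> {1..T}"
  shows "(norm (subgrad \<omega> t))\<^sup>2 \<le> grad_bound"
  using norm_vec_sq_le[of "subgrad \<omega> t" "bb + ab"] abs_subgrad_le[OF assms] by (simp add: grad_bound_def)

lemma inner_subgrad_ge:
  assumes "bounded_path \<omega>" "t \<in> {1..T}"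
  shows "price \<omega> (t - 1) \<bullet> repl (\<omega> t) - rb \<le> price \<omega> (t - 1) \<bullet> subgrad \<omega> t"
  using bounded_pathD(1)[OF assms] rb_pos
  by (auto simp: subgrad_def dual_dec_def inner_diff_right)

lemma price_component_mult_le_inner:
  "bounded_path \<omega> \<Longrightarrow> t \<in> {1..T} \<Longrightarrow> price \<omega> s $ j * repl (\<omega> t) $ j \<le> price \<omega> s \<bullet> repl (\<omega> t)"
  using price_nonneg bounded_pathD(4) by (intro vec_component_mult_le_inner) auto

lemma inner_price_repl_nonneg:
  "bounded_path \<omega> \<Longrightarrow> t \<in> {1..T} \<Longrightarrow> 0 \<le> price \<omega> s \<bullet> repl (\<omega> t)"
  unfolding inner_vec_def using price_nonneg bounded_pathD(4) by (auto intro!: sum_nonneg)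

lemma potential_step:
  assumes "bounded_path \<omega>" "warmup < s" "s \<le> T"
  shows "(norm (price \<omega> s))\<^sup>2 \<le>
    (norm (price \<omega> (s - 1)))\<^sup>2 - 2 * eta * (price \<omega> (s - 1) \<bullet> subgrad \<omega> s) + eta\<^sup>2 * grad_bound"
proof -
  obtain s0 where s: "s = Suc s0"
    using assms(2) by (cases s) auto
  have "norm (price \<omega> s) \<le> norm (price \<omega> s0 - eta *\<^sub>R subgrad \<omega> s)"
    using assms(2) unfolding s by (subst price_Suc) (simp_all only: norm_vec_max_zero_le)
  then have "(norm (price \<omega> s))\<^sup>2 \<le> (norm (price \<omega> s0 - eta *\<^sub>R subgrad \<omega> s))\<^sup>2"
    by (simp add: power_mono)
  also have "\<dots> = (norm (price \<omega> s0))\<^sup>2 - 2 * eta * (price \<omega> s0 \<bullet> subgrad \<omega> s)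
      + eta\<^sup>2 * (norm (subgrad \<omega> s))\<^sup>2"
    unfolding power2_norm_eq_inner
    by (simp add: inner_diff_left inner_diff_right inner_commute power2_eq_square algebra_simps)
  also have "\<dots> \<le> (norm (price \<omega> s0))\<^sup>2 - 2 * eta * (price \<omega> s0 \<bullet> subgrad \<omega> s) + eta\<^sup>2 * grad_bound"
    using norm_subgrad_sq_le[OF assms(1), of s] assms s by (simp add: mult_left_mono)
  finally show ?thesis
    using s by simp
qed

lemma potential_telescope:
  assumes "bounded_path \<omega>" "warmup \<le> s'" "s' \<le> s" "s \<le> T"
  shows "(norm (price \<omega> s))\<^sup>2 \<le> (norm (price \<omega> s'))\<^sup>2
    - 2 * eta * (\<Sum>t\<in>{s'<..s}. price \<omega> (t - 1) \<bullet> subgrad \<omega> t) + real (s - s') * eta\<^sup>2 * grad_bound"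
  using assms(3,4)
proof (induction s rule: dec_induct)
  case (step s)
  have "{s'<..Suc s} = insert (Suc s) {s'<..s}"
    using step by auto
  then show ?case
    using step potential_step[OF assms(1), of "Suc s"] assms(2) by (simp add: algebra_simps)
qed simp

lemma price_step_le:
  assumes "bounded_path \<omega>" "1 \<le> s" "s \<le> T"
  shows "\<bar>price \<omega> s $ j - price \<omega> (s - 1) $ j\<bar> \<le> eta * (bb + ab)"
proof (cases "s \<le> warmup")
  case True
  then show ?thesis
    using price_warmup[of s \<omega>] price_warmup[of "s - 1" \<omega>] eta_pos ab_pos bb_pos by simp
next
  case False
  obtain s0 where s: "s = Suc s0"
    using assms(2) by (cases s) auto
  have "\<bar>eta * subgrad \<omega> s $ j\<bar> \<le> eta * (bb + ab)"
    using abs_subgrad_le[OF assms(1), of s j] assms eta_pos by (simp add: abs_mult mult_left_mono)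
  then show ?thesis
    using price_Suc[of s0 \<omega>] price_nonneg[of s0 \<omega> j] False s by (auto simp: max_def abs_le_iff)
qed

lemma price_lipschitz:
  assumes "bounded_path \<omega>" "s' \<le> s" "s \<le> T"
  shows "price \<omega> s $ j - real (s - s') * eta * (bb + ab) \<le> price \<omega> s' $ j"
  using assms(2,3)
proof (induction s rule: dec_induct)
  case (step s)
  then show ?case
    using price_step_le[OF assms(1), of "Suc s" j] by (simp add: algebra_simps abs_le_iff)
qed simp

definition replenished_windows :: "(nat \<Rightarrow> 'm sample) \<Rightarrow> nat \<Rightarrow> bool" where
  "replenished_windows \<omega> L \<longleftrightarrow>
     (\<forall>j u. 1 \<le> u \<longrightarrow> u + L \<le> T + 1 \<longrightarrow> real L * (bl / 2) \<le> (\<Sum>t\<in>{u..<u+L}. repl (\<omega> t) $ j))"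

text \<open>While a price stays above \<open>price_floor\<close> during a window replenishing at rate \<open>bl/2\<close>,
  the descent term of the potential outweighs its increase \<open>eta\<^sup>2 * grad_bound / 2\<close> per period.\<close>

definition price_floor :: real where
  "price_floor = (rb + eta * grad_bound / 2) / (bl / 2)"

definition price_cap :: "nat \<Rightarrow> real" where
  "price_cap L = price_floor + real L * eta * (bb + ab)"

definition potential_bound :: "nat \<Rightarrow> real" where
  "potential_bound L =
     max (real CARD('m) * (price_cap L)\<^sup>2) (real L * (2 * eta * rb + eta\<^sup>2 * grad_bound))"

lemma price_floor_pos: "0 < price_floor"
  unfolding price_floor_def using rb_pos bl_pos eta_pos grad_bound_nonneg by (simp add: add_pos_nonneg)

lemma potential_le_elapsed:
  assumes "bounded_path \<omega>" "s \<le> T"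
  shows "(norm (price \<omega> s))\<^sup>2 \<le> real (s - warmup) * (2 * eta * rb + eta\<^sup>2 * grad_bound)"
proof (cases "warmup \<le> s")
  case True
  have "- rb \<le> price \<omega> (t - 1) \<bullet> subgrad \<omega> t" if "t \<in> {warmup<..s}" for t
  proof -
    have "t \<in> {1..T}"
      using that assms(2) by auto
    with inner_subgrad_ge[OF assms(1)] inner_price_repl_nonneg[OF assms(1)] show ?thesis
      by (smt (verit))
  qed
  then have "(\<Sum>t\<in>{warmup<..s}. - rb) \<le> (\<Sum>t\<in>{warmup<..s}. price \<omega> (t - 1) \<bullet> subgrad \<omega> t)"
    by (rule sum_mono)
  then have "2 * eta * (- (real (s - warmup) * rb))
      \<le> 2 * eta * (\<Sum>t\<in>{warmup<..s}. price \<omega> (t - 1) \<bullet> subgrad \<omega> t)"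
    using eta_pos by (intro mult_left_mono) auto
  moreover have "(norm (price \<omega> s))\<^sup>2 \<le> - 2 * eta * (\<Sum>t\<in>{warmup<..s}. price \<omega> (t - 1) \<bullet> subgrad \<omega> t)
      + real (s - warmup) * eta\<^sup>2 * grad_bound"
    using potential_telescope[OF assms(1) order.refl True assms(2)] by (simp add: price_warmup)
  moreover have "real (s - warmup) * (2 * eta * rb + eta\<^sup>2 * grad_bound)
      = - (2 * eta * (- (real (s - warmup) * rb))) + real (s - warmup) * eta\<^sup>2 * grad_bound"
    by (simp add: algebra_simps)
  ultimately show ?thesis
    by linarith
qed (simp add: price_warmup)

lemma replenished_window_sum:
  assumes "replenished_windows \<omega> L" "L \<le> s" "s \<le> T"
  shows "real L * (bl / 2) \<le> (\<Sum>t\<in>{s - L<..s}. repl (\<omega> t) $ j)"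
proof -
  have "1 \<le> s - L + 1" "(s - L + 1) + L \<le> T + 1"
    using assms(2,3) by auto
  then have "real L * (bl / 2) \<le> (\<Sum>t\<in>{s - L + 1..<(s - L + 1) + L}. repl (\<omega> t) $ j)"
    using assms(1) unfolding replenished_windows_def by blast
  moreover have "{s - L + 1..<(s - L + 1) + L} = {s - L<..s}"
    using assms(2) by auto
  ultimately show ?thesis
    by (simp only:)
qed

lemma inner_subgrad_ge_price_floor:
  assumes path: "bounded_path \<omega>" and s: "s \<le> T" and high: "price_cap L < price \<omega> s $ j"
    and t: "t \<in> {s - L<..s}"
  shows "price_floor * repl (\<omega> t) $ j - rb \<le> price \<omega> (t - 1) \<bullet> subgrad \<omega> t"
proof -
  have "t - 1 \<le> s"
    using t by auto
  then have "price \<omega> s $ j - real (s - (t - 1)) * eta * (bb + ab) \<le> price \<omega> (t - 1) $ j"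
    using price_lipschitz[OF path _ s] by blast
  moreover have "real (s - (t - 1)) * (eta * (bb + ab)) \<le> real L * (eta * (bb + ab))"
    using t eta_pos ab_pos bb_pos by (intro mult_right_mono) auto
  ultimately have "price_floor \<le> price \<omega> (t - 1) $ j"
    using high by (simp add: price_cap_def mult.assoc)
  then have "price_floor * repl (\<omega> t) $ j \<le> price \<omega> (t - 1) \<bullet> repl (\<omega> t)"
    using bounded_pathD(4)[OF path, of t j] price_component_mult_le_inner[OF path, of t "t - 1" j] t s
    by (auto intro: order.trans[OF mult_right_mono])
  then show ?thesis
    using inner_subgrad_ge[OF path, of t] t s by auto
qed

lemma window_descent_ge:
  assumes path: "bounded_path \<omega>" and windows: "replenished_windows \<omega> L"
    and s: "L \<le> s" "s \<le> T" and high: "price_cap L < price \<omega> s $ j"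
  shows "real L * eta * grad_bound / 2 \<le> (\<Sum>t\<in>{s - L<..s}. price \<omega> (t - 1) \<bullet> subgrad \<omega> t)"
proof -
  let ?W = "{s - L<..s}"
  have "price_floor * (\<Sum>t\<in>?W. repl (\<omega> t) $ j) - real L * rb \<le> (\<Sum>t\<in>?W. price \<omega> (t - 1) \<bullet> subgrad \<omega> t)"
    using sum_mono[of ?W "\<lambda>t. price_floor * repl (\<omega> t) $ j - rb"]
      inner_subgrad_ge_price_floor[OF path s(2) high] s
    by (simp add: sum_subtractf sum_distrib_left)
  moreover have "price_floor * (real L * (bl / 2)) \<le> price_floor * (\<Sum>t\<in>?W. repl (\<omega> t) $ j)"
    using replenished_window_sum[OF windows s] price_floor_pos by (intro mult_left_mono) auto
  moreover have "price_floor * (real L * (bl / 2)) - real L * rb = real L * eta * grad_bound / 2"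
    using bl_pos by (simp add: price_floor_def field_simps)
  ultimately show ?thesis
    by linarith
qed

lemma potential_window_nonincreasing:
  assumes path: "bounded_path \<omega>" and windows: "replenished_windows \<omega> L"
    and s: "warmup + L \<le> s" "s \<le> T" and high: "price_cap L < price \<omega> s $ j"
  shows "(norm (price \<omega> s))\<^sup>2 \<le> (norm (price \<omega> (s - L)))\<^sup>2"
proof -
  let ?descent = "\<Sum>t\<in>{s - L<..s}. price \<omega> (t - 1) \<bullet> subgrad \<omega> t"
  have "2 * eta * (real L * eta * grad_bound / 2) \<le> 2 * eta * ?descent"
    using window_descent_ge[OF path windows _ s(2) high] s(1) eta_pos by (intro mult_left_mono) auto
  moreover have "2 * eta * (real L * eta * grad_bound / 2) = real (s - (s - L)) * eta\<^sup>2 * grad_bound"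
    using s by (simp add: power2_eq_square)
  moreover have "(norm (price \<omega> s))\<^sup>2
      \<le> (norm (price \<omega> (s - L)))\<^sup>2 - 2 * eta * ?descent + real (s - (s - L)) * eta\<^sup>2 * grad_bound"
    by (rule potential_telescope[OF path]) (use s in auto)
  ultimately show ?thesis
    by linarith
qed

lemma potential_le_bound:
  assumes path: "bounded_path \<omega>" and L: "1 \<le> L" and windows: "replenished_windows \<omega> L"
  shows "s \<le> T \<Longrightarrow> (norm (price \<omega> s))\<^sup>2 \<le> potential_bound L"
proof (induction s rule: less_induct)
  case (less s)
  consider "s < warmup + L" | "warmup + L \<le> s" "\<forall>j. price \<omega> s $ j \<le> price_cap L"
    | j where "warmup + L \<le> s" "price_cap L < price \<omega> s $ j"
    by (meson not_le)
  then show ?case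
  proof cases
    case 1
    have "real (s - warmup) * (2 * eta * rb + eta\<^sup>2 * grad_bound)
        \<le> real L * (2 * eta * rb + eta\<^sup>2 * grad_bound)"
      using 1 eta_pos rb_pos grad_bound_nonneg by (intro mult_right_mono) auto
    then show ?thesis
      using potential_le_elapsed[OF path less.prems] unfolding potential_bound_def by linarith
  next
    case 2
    then have "(norm (price \<omega> s))\<^sup>2 \<le> real CARD('m) * (price_cap L)\<^sup>2"
      using price_nonneg[of s \<omega>] by (intro norm_vec_sq_le) (simp add: abs_of_nonneg)
    then show ?thesis
      unfolding potential_bound_def by linarith
  next
    case 3
    have "s - L < s" "s - L \<le> T"
      using 3(1) less.prems L by auto
    then show ?thesis
      using potential_window_nonincreasing[OF path windows 3(1) less.prems 3(2)] less.IH[of "s - L"]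
      by linarith
  qed
qed

lemma price_le_sqrt_potential_bound:
  assumes "bounded_path \<omega>" "1 \<le> L" "replenished_windows \<omega> L" "s \<le> T"
  shows "price \<omega> s $ j \<le> sqrt (potential_bound L)"
proof -
  have "price \<omega> s $ j \<le> norm (price \<omega> s)"
    using component_le_norm_cart[of "price \<omega> s" j] by simp
  also have "\<dots> \<le> sqrt (potential_bound L)"
    using potential_le_bound[OF assms] by (simp add: real_le_rsqrt)
  finally show ?thesis .
qed

definition warmup_replenished :: "(nat \<Rightarrow> 'm sample) \<Rightarrow> bool" where
  "warmup_replenished \<omega> \<longleftrightarrow> (\<forall>j. real warmup * (bl / 2) \<le> (\<Sum>t=1..warmup. repl (\<omega> t) $ j))"

lemma stock_after_warmup:
  assumes "warmup \<le> t" "\<forall>k\<in>{warmup<..t}. dec \<omega> k = dual_dec \<omega> k"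
  shows "stock \<omega> t $ j = (\<Sum>k=1..warmup. repl (\<omega> k) $ j) + (\<Sum>k\<in>{warmup<..t}. subgrad \<omega> k $ j)"
proof -
  have "{1..t} = {1..warmup} \<union> {warmup<..t}"
    using assms(1) by auto
  then have "stock \<omega> t $ j = (\<Sum>k=1..warmup. repl (\<omega> k) $ j - dec \<omega> k * cons (\<omega> k) $ j)
      + (\<Sum>k\<in>{warmup<..t}. repl (\<omega> k) $ j - dec \<omega> k * cons (\<omega> k) $ j)"
    unfolding stock_eq_sum by (simp add: sum_component) (rule sum.union_disjoint; auto)
  also have "(\<Sum>k=1..warmup. repl (\<omega> k) $ j - dec \<omega> k * cons (\<omega> k) $ j) = (\<Sum>k=1..warmup. repl (\<omega> k) $ j)"
    by (rule sum.cong) (auto simp: dec_warmup)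
  also have "(\<Sum>k\<in>{warmup<..t}. repl (\<omega> k) $ j - dec \<omega> k * cons (\<omega> k) $ j) = (\<Sum>k\<in>{warmup<..t}. subgrad \<omega> k $ j)"
    using assms(2) by (intro sum.cong) (auto simp: subgrad_def)
  finally show ?thesis .
qed

text \<open>The inventory never binds after the warm-up: the stock equals the warm-up replenishment plus
  \<open>-price/eta\<close>, and prices stay below \<open>sqrt (potential_bound L)\<close>.\<close>

lemma dec_eq_dual_dec:
  assumes path: "bounded_path \<omega>" and L: "1 \<le> L" and windows: "replenished_windows \<omega> L"
    and initial: "warmup_replenished \<omega>"
    and enough: "sqrt (potential_bound L) / eta + ab \<le> real warmup * (bl / 2)"
  shows "t \<in> {warmup<..T} \<Longrightarrow> dec \<omega> t = dual_dec \<omega> t"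
proof (induction t rule: less_induct)
  case (less t)
  have t: "warmup \<le> t - 1" "t - 1 \<le> T" "t \<in> {1..T}"
    using less.prems by auto
  have "cons (\<omega> t) $ j \<le> stock \<omega> (t - 1) $ j" for j
  proof -
    have "- eta * (\<Sum>k\<in>{warmup<..t - 1}. subgrad \<omega> k $ j) \<le> sqrt (potential_bound L)"
      using price_ge_neg_subgrad_sum[OF t(1), of \<omega> j] price_le_sqrt_potential_bound[OF path L windows t(2), of j]
      by linarith
    then have "- (sqrt (potential_bound L) / eta) \<le> (\<Sum>k\<in>{warmup<..t - 1}. subgrad \<omega> k $ j)"
      using eta_pos by (simp add: field_simps)
    moreover have "stock \<omega> (t - 1) $ j
        = (\<Sum>k=1..warmup. repl (\<omega> k) $ j) + (\<Sum>k\<in>{warmup<..t - 1}. subgrad \<omega> k $ j)"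
      using less.IH less.prems by (intro stock_after_warmup[OF t(1)]) auto
    ultimately show ?thesis
      using initial[unfolded warmup_replenished_def, rule_format, of j] enough
        bounded_pathD(2)[OF path t(3), of j]
      by linarith
  qed
  then show ?case
    using less.prems by (simp add: dec_after_warmup)
qed

lemma alg_reward_after_warmup:
  "alg_reward rb ab bb bl 9 T \<omega> = (\<Sum>t\<in>{warmup<..T}. rew (\<omega> t) * dec \<omega> t)"
  unfolding alg_reward_def
  by (rule sum.mono_neutral_right) (auto simp: dec_warmup)

lemma dual_reward_ge:
  assumes "bounded_path \<omega>"
  shows "(\<Sum>t\<in>{warmup<..T}. dual_fun (\<omega> t) (price \<omega> (t - 1))) - real (T - warmup) * eta * grad_bound / 2
    \<le> (\<Sum>t\<in>{warmup<..T}. rew (\<omega> t) * dual_dec \<omega> t)"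
proof (cases "warmup \<le> T")
  case True
  have "0 \<le> (norm (price \<omega> warmup))\<^sup>2
      - 2 * eta * (\<Sum>t\<in>{warmup<..T}. price \<omega> (t - 1) \<bullet> subgrad \<omega> t) + real (T - warmup) * eta\<^sup>2 * grad_bound"
    using potential_telescope[OF assms order.refl True order.refl] by (meson order.trans zero_le_power2)
  then have "2 * eta * (\<Sum>t\<in>{warmup<..T}. price \<omega> (t - 1) \<bullet> subgrad \<omega> t)
      \<le> 2 * eta * (real (T - warmup) * eta * grad_bound / 2)"
    by (simp add: price_warmup power2_eq_square mult.assoc mult.left_commute)
  then have "(\<Sum>t\<in>{warmup<..T}. price \<omega> (t - 1) \<bullet> subgrad \<omega> t) \<le> real (T - warmup) * eta * grad_bound / 2"
    using eta_pos by simp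
  then show ?thesis
    by (simp add: reward_dual_dec sum_subtractf)
qed simp

lemma alg_reward_ge:
  assumes "bounded_path \<omega>"
  shows "(\<Sum>t\<in>{warmup<..T}. rew (\<omega> t) * dual_dec \<omega> t) - real T * rb \<le> alg_reward rb ab bb bl 9 T \<omega>"
proof -
  have "rew (\<omega> t) * dual_dec \<omega> t - rb \<le> rew (\<omega> t) * dec \<omega> t" if "t \<in> {warmup<..T}" for t
    using that dec_le_dual_dec[of t \<omega>] dec_01[of \<omega> t] dual_dec_01[of \<omega> t] bounded_pathD(1)[OF assms, of t]
    by auto
  then have "(\<Sum>t\<in>{warmup<..T}. rew (\<omega> t) * dual_dec \<omega> t) - real (T - warmup) * rb
      \<le> alg_reward rb ab bb bl 9 T \<omega>"
    using sum_mono[of "{warmup<..T}" "\<lambda>t. rew (\<omega> t) * dual_dec \<omega> t - rb"]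
    by (simp add: alg_reward_after_warmup sum_subtractf)
  moreover have "real (T - warmup) * rb \<le> real T * rb"
    using rb_pos by (intro mult_right_mono) auto
  ultimately show ?thesis
    by linarith
qed

lemma price_le_elapsed: "bounded_path \<omega> \<Longrightarrow> s \<le> T \<Longrightarrow> price \<omega> s $ j \<le> real s * eta * (bb + ab)"
  using price_lipschitz[of \<omega> 0 s j] price_warmup[of 0 \<omega>] by simp

lemma abs_alg_reward_le: "bounded_path \<omega> \<Longrightarrow> \<bar>alg_reward rb ab bb bl 9 T \<omega>\<bar> \<le> real T * rb"
proof -
  assume path: "bounded_path \<omega>"
  have "\<bar>alg_reward rb ab bb bl 9 T \<omega>\<bar> \<le> (\<Sum>t=1..T. \<bar>rew (\<omega> t) * dec \<omega> t\<bar>)"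
    unfolding alg_reward_def by (rule sum_abs)
  also have "\<dots> \<le> (\<Sum>t=1..T. rb)"
  proof (rule sum_mono)
    fix t assume "t \<in> {1..T}"
    then show "\<bar>rew (\<omega> t) * dec \<omega> t\<bar> \<le> rb"
      using bounded_pathD(1)[OF path] dec_01[of \<omega> t] rb_pos by (auto simp: abs_mult less_imp_le)
  qed
  finally show ?thesis
    by simp
qed

end

section \<open>Expectations over i.i.d. sample paths\<close>

lemma borel_measurable_fst_comp[measurable (raw)]:
  "f \<in> borel_measurable N \<Longrightarrow>
    (\<lambda>x. fst (f x :: 'a::topological_space \<times> 'b::topological_space)) \<in> borel_measurable N"
  by (rule borel_measurable_continuous_on) (intro continuous_intros)

lemma borel_measurable_snd_comp[measurable (raw)]:
  "f \<in> borel_measurable N \<Longrightarrow>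
    (\<lambda>x. snd (f x :: 'a::topological_space \<times> 'b::topological_space)) \<in> borel_measurable N"
  by (rule borel_measurable_continuous_on) (intro continuous_intros)

lemma borel_measurable_vec_nth_comp[measurable (raw)]:
  "f \<in> borel_measurable N \<Longrightarrow> (\<lambda>x. (f x :: real^'n::finite) $ j) \<in> borel_measurable N"
  by (rule borel_measurable_continuous_on) (intro continuous_intros)

lemma borel_measurable_vec_lambda[measurable (raw)]:
  assumes "\<And>j. f j \<in> borel_measurable N"
  shows "(\<lambda>x. (\<chi> j. f j x) :: real^'n::finite) \<in> borel_measurable N"
proof -
  have "(\<lambda>x. (\<chi> j. f j x) :: real^'n) = (\<lambda>x. \<Sum>j\<in>UNIV. f j x *\<^sub>R axis j 1)"
    by (rule ext) (simp add: vec_eq_iff axis_def if_distrib cong: if_cong)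
  also have "\<dots> \<in> borel_measurable N"
    using assms by measurable
  finally show ?thesis .
qed

lemma borel_measurable_rew[measurable (raw)]:
  "f \<in> borel_measurable N \<Longrightarrow> (\<lambda>x. rew (f x)) \<in> borel_measurable N"
  unfolding rew_def by measurable

lemma borel_measurable_cons[measurable (raw)]:
  "f \<in> borel_measurable N \<Longrightarrow> (\<lambda>x. cons (f x)) \<in> borel_measurable N"
  unfolding cons_def by measurable

lemma borel_measurable_repl[measurable (raw)]:
  "f \<in> borel_measurable N \<Longrightarrow> (\<lambda>x. repl (f x)) \<in> borel_measurable N"
  unfolding repl_def by measurable

lemma borel_measurable_alg_dec[measurable (raw)]:
  fixes S :: "_ \<Rightarrow> (real^'m::finite) \<times> (real^'m)" and Z :: "_ \<Rightarrow> 'm sample"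
  assumes [measurable]: "S \<in> borel_measurable N" "Z \<in> borel_measurable N"
  shows "(\<lambda>x. alg_dec rb ab bb bl C T t (S x) (Z x)) \<in> borel_measurable N"
  unfolding alg_dec_def by measurable

lemma borel_measurable_alg_step[measurable (raw)]:
  fixes S :: "_ \<Rightarrow> (real^'m::finite) \<times> (real^'m)" and Z :: "_ \<Rightarrow> 'm sample"
  assumes [measurable]: "S \<in> borel_measurable N" "Z \<in> borel_measurable N"
  shows "(\<lambda>x. alg_step rb ab bb bl C T t (S x) (Z x)) \<in> borel_measurable N"
  unfolding alg_step_def Let_def by measurable

lemma Max_image_if_eq:
  fixes f :: "'a \<Rightarrow> 'b::linorder"
  assumes "finite A" "B \<subseteq> A" "S\<^sub>0 \<in> B" "c \<le> f S\<^sub>0"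
  shows "Max ((\<lambda>S. if S \<in> B then f S else c) ` A) = Max (f ` B)"
proof -
  have "finite B"
    using assms(1,2) by (rule finite_subset[rotated])
  then have "c \<le> Max (f ` B)"
    using assms(3,4) by (auto intro: order.trans[OF _ Max_ge])
  let ?g = "\<lambda>S. if S \<in> B then f S else c"
  show ?thesis
  proof (rule antisym)
    show "Max (?g ` A) \<le> Max (f ` B)"
      using assms \<open>finite B\<close> \<open>c \<le> Max (f ` B)\<close> by (intro Max.boundedI) auto
    have "f S \<le> Max (?g ` A)" if "S \<in> B" for S
      using that assms(1,2) Max_ge[of "?g ` A" "?g S"] by auto
    then show "Max (f ` B) \<le> Max (?g ` A)"
      using \<open>finite B\<close> assms(3) by (intro Max.boundedI) auto
  qed
qed

lemma hindsight_opt_eq_Max_penalized: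
  fixes T :: nat and \<omega> :: "nat \<Rightarrow> ('m::finite) sample"
  defines "feasible S \<equiv> prefix_feasible T \<omega> (\<lambda>k. if k \<in> S then 1 else 0)"
  shows "hindsight_opt T \<omega> = (if \<exists>S\<in>Pow {1..T}. feasible S
     then Max ((\<lambda>S. if feasible S then (\<Sum>k\<in>S. rew (\<omega> k)) else - (\<Sum>k=1..T. \<bar>rew (\<omega> k)\<bar>))
               ` Pow {1..T})
     else Max {})"
proof -
  define B where "B = {S \<in> Pow {1..T}. feasible S}"
  have opt: "hindsight_opt T \<omega> = Max ((\<lambda>S. \<Sum>k\<in>S. rew (\<omega> k)) ` B)"
    unfolding hindsight_opt_def B_def feasible_def by (rule arg_cong[where f=Max]) auto
  show ?thesis
  proof (cases "\<exists>S\<in>Pow {1..T}. feasible S")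
    case True
    then obtain S\<^sub>0 where S\<^sub>0: "S\<^sub>0 \<in> B"
      unfolding B_def by blast
    have "- (\<Sum>k=1..T. \<bar>rew (\<omega> k)\<bar>) \<le> (\<Sum>k\<in>S\<^sub>0. rew (\<omega> k))"
    proof -
      have "- (\<Sum>k\<in>S\<^sub>0. rew (\<omega> k)) \<le> (\<Sum>k\<in>S\<^sub>0. \<bar>rew (\<omega> k)\<bar>)"
        by (metis abs_ge_minus_self order.trans sum_abs)
      also have "\<dots> \<le> (\<Sum>k=1..T. \<bar>rew (\<omega> k)\<bar>)"
        using S\<^sub>0 by (intro sum_mono2) (auto simp: B_def)
      finally show ?thesis
        by simp
    qed
    then have "Max ((\<lambda>S. if S \<in> B then (\<Sum>k\<in>S. rew (\<omega> k)) else - (\<Sum>k=1..T. \<bar>rew (\<omega> k)\<bar>))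
        ` Pow {1..T}) = hindsight_opt T \<omega>"
      unfolding opt using S\<^sub>0 by (intro Max_image_if_eq) (auto simp: B_def)
    moreover have "(\<lambda>S. if S \<in> B then (\<Sum>k\<in>S. rew (\<omega> k)) else - (\<Sum>k=1..T. \<bar>rew (\<omega> k)\<bar>))
        ` Pow {1..T}
      = (\<lambda>S. if feasible S then (\<Sum>k\<in>S. rew (\<omega> k)) else - (\<Sum>k=1..T. \<bar>rew (\<omega> k)\<bar>))
        ` Pow {1..T}"
      by (rule image_cong) (auto simp: B_def)
    ultimately show ?thesis
      using True by simp
  next
    case False
    then have "B = {}"
      unfolding B_def by auto
    with False show ?thesis
      unfolding opt by simp
  qed
qed

locale iid_policy = bounded_policy rb ab bb bl T mty
  for rb ab bb bl :: real and T :: nat and mty :: "'m::finite itself" +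
  fixes M :: "'m sample measure"
  assumes bounded_dist: "bounded_dist M rb ab bb bl"
begin

abbreviation paths :: "(nat \<Rightarrow> 'm sample) measure" where
  "paths \<equiv> PiM UNIV (\<lambda>_. M)"

lemma prob_space_M: "prob_space M"
  and sets_M: "sets M = sets borel"
  and AE_bounded_sample: "AE z in M. bounded_sample rb ab bb z"
  and mean_repl_gt: "bl < (\<integral>z. repl z $ j \<partial>M)"
  using bounded_dist unfolding bounded_dist_def bounded_sample_def by blast+

sublocale M: prob_space M
  by (rule prob_space_M)

sublocale Paths: product_prob_space "\<lambda>_::nat. M" UNIV
  by (simp add: product_prob_space_def product_sigma_finite_def M.sigma_finite_measure_axioms
      product_prob_space_axioms_def prob_space_M)

lemma measurable_into_M: "measurable N M = measurable N borel"
  and measurable_from_M: "measurable M N = measurable borel N"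
  by (auto intro!: measurable_cong_sets simp: sets_M)

lemma measurable_coordinate[measurable]: "(\<lambda>\<omega>. \<omega> t) \<in> borel_measurable paths"
proof -
  have "(\<lambda>\<omega>. \<omega> t) \<in> measurable paths M"
    by simp
  then show ?thesis
    unfolding measurable_into_M .
qed

lemma measurable_alg_state[measurable]: "(\<lambda>\<omega>. alg_state rb ab bb bl 9 T t \<omega>) \<in> borel_measurable paths"
proof (induction t)
  case (Suc t)
  note Suc[measurable]
  show ?case
    unfolding alg_state.simps by measurable
qed simp

lemma measurable_alg_reward[measurable]:
  "(\<lambda>\<omega>. alg_reward rb ab bb bl 9 T \<omega>) \<in> borel_measurable paths"
  unfolding alg_reward_def alg_x_def by measurable

lemma measurable_prefix_feasible[measurable]:
  "Measurable.pred paths (\<lambda>\<omega>. prefix_feasible T \<omega> (\<lambda>k. if k \<in> S then 1 else 0))"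
proof -
  have [measurable]: "Measurable.pred paths (\<lambda>\<omega>.
      (\<Sum>k=1..t. cons (\<omega> k) $ j * (if k \<in> S then 1 else 0)) \<le> (\<Sum>k=1..t. repl (\<omega> k) $ j))" for j t
    unfolding Measurable.pred_def by (rule borel_measurable_le) measurable
  show ?thesis
    unfolding prefix_feasible_def by measurable
qed

lemma measurable_hindsight_opt[measurable]: "(\<lambda>\<omega>. hindsight_opt T \<omega>) \<in> borel_measurable paths"
  unfolding hindsight_opt_eq_Max_penalized by measurable

lemma AE_bounded_path: "AE \<omega> in paths. bounded_path \<omega>"
  by (intro AE_finite_allI finite_atLeastAtMost AE_PiM_component[OF prob_space_M] AE_bounded_sample) auto

lemma integrable_hindsight_opt: "integrable paths (\<lambda>\<omega>. hindsight_opt T \<omega>)"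
  using AE_bounded_path
  by (intro Paths.integrable_const_bound[where B="real T * rb"])
     (auto elim!: eventually_mono intro!: abs_hindsight_opt_le simp: bounded_sample_def less_imp_le)

lemma integrable_alg_reward: "integrable paths (\<lambda>\<omega>. alg_reward rb ab bb bl 9 T \<omega>)"
  by (intro Paths.integrable_const_bound[where B="real T * rb"] eventually_mono[OF AE_bounded_path])
    (simp_all add: abs_alg_reward_le)

lemma integral_coordinate:
  fixes f :: "'m sample \<Rightarrow> real"
  assumes f: "integrable M f"
  shows "integrable paths (\<lambda>\<omega>. f (\<omega> t))" "(\<integral>\<omega>. f (\<omega> t) \<partial>paths) = (\<integral>z. f z \<partial>M)"
proof -
  have distr: "distr paths M (\<lambda>\<omega>. \<omega> t) = M"
    by (rule Paths.PiM_component) simp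
  have coordinate: "(\<lambda>\<omega>. \<omega> t) \<in> measurable paths M"
    by simp
  have f_meas: "f \<in> borel_measurable M"
    using f by simp
  show "integrable paths (\<lambda>\<omega>. f (\<omega> t))"
    using integrable_distr_eq[OF coordinate f_meas] f distr by simp
  show "(\<integral>\<omega>. f (\<omega> t) \<partial>paths) = (\<integral>z. f z \<partial>M)"
    using integral_distr[OF coordinate f_meas] distr by simp
qed

definition dual_mean :: "real^'m \<Rightarrow> real" where
  "dual_mean q = (\<integral>z. dual_fun z q \<partial>M)"

definition dual_min :: real where
  "dual_min = Inf (dual_mean ` {q. \<forall>j. 0 \<le> q $ j})"

lemma integrable_dual_fun: "integrable M (\<lambda>z. dual_fun z q)"
proof (rule M.integrable_const_bound[where B="rb + (\<Sum>j\<in>UNIV. \<bar>q $ j\<bar>) * (ab + bb)"])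
  show "AE z in M. norm (dual_fun z q) \<le> rb + (\<Sum>j\<in>UNIV. \<bar>q $ j\<bar>) * (ab + bb)"
    using AE_bounded_sample
  proof (rule eventually_mono)
    fix z :: "'m sample"
    assume "bounded_sample rb ab bb z"
    then have "\<bar>rew z\<bar> \<le> rb" "\<bar>cons z $ j\<bar> \<le> ab" "\<bar>repl z $ j\<bar> \<le> bb" for j
      using component_le_norm_cart[of "cons z" j] by (auto simp: bounded_sample_def less_imp_le)
    then show "norm (dual_fun z q) \<le> rb + (\<Sum>j\<in>UNIV. \<bar>q $ j\<bar>) * (ab + bb)"
      by (simp add: abs_dual_fun_le)
  qed
  show "(\<lambda>z. dual_fun z q) \<in> borel_measurable M"
    unfolding measurable_from_M dual_fun_def by measurable
qed

lemma dual_mean_nonneg: "\<forall>j. 0 \<le> q $ j \<Longrightarrow> 0 \<le> dual_mean q"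
  unfolding dual_mean_def
  by (intro integral_nonneg_AE eventually_mono[OF AE_bounded_sample] dual_fun_nonneg)
     (simp_all add: bounded_sample_def)

lemma dual_min_le: "\<forall>j. 0 \<le> q $ j \<Longrightarrow> dual_min \<le> dual_mean q"
  unfolding dual_min_def using dual_mean_nonneg by (intro cInf_lower bdd_belowI[of _ 0]) auto

lemma dual_min_nonneg: "0 \<le> dual_min"
  unfolding dual_min_def using dual_mean_nonneg by (intro cInf_greatest) (auto intro: exI[of _ 0])

lemma dual_min_le_rb: "dual_min \<le> rb"
proof -
  have "dual_mean 0 \<le> (\<integral>z. rb \<partial>M)"
    unfolding dual_mean_def
    by (intro integral_mono_AE integrable_dual_fun eventually_mono[OF AE_bounded_sample])
       (auto simp: dual_fun_def bounded_sample_def)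
  then show ?thesis
    using dual_min_le[of 0] by (simp add: M.prob_space)
qed

lemma expected_hindsight_opt_le: "(\<integral>\<omega>. hindsight_opt T \<omega> \<partial>paths) \<le> real T * dual_min"
proof -
  have "(\<integral>\<omega>. hindsight_opt T \<omega> \<partial>paths) \<le> real T * dual_mean q" if q: "\<forall>j. 0 \<le> q $ j" for q
  proof -
    have "(\<integral>\<omega>. hindsight_opt T \<omega> \<partial>paths) \<le> (\<integral>\<omega>. (\<Sum>t=1..T. dual_fun (\<omega> t) q) \<partial>paths)"
      using integrable_hindsight_opt integral_coordinate(1)[OF integrable_dual_fun]
    proof (intro integral_mono_AE eventually_mono[OF AE_bounded_path])
      fix \<omega> :: "nat \<Rightarrow> 'm sample"
      assume "bounded_path \<omega>"
      then show "hindsight_opt T \<omega> \<le> (\<Sum>t=1..T. dual_fun (\<omega> t) q)"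
        using q by (intro hindsight_opt_le_dual) (auto simp: bounded_sample_def)
    qed auto
    also have "\<dots> = (\<Sum>t=1..T. (\<integral>\<omega>. dual_fun (\<omega> t) q \<partial>paths))"
      using integral_coordinate(1)[OF integrable_dual_fun] by (intro Bochner_Integration.integral_sum) auto
    also have "\<dots> = real T * dual_mean q"
      by (simp add: integral_coordinate(2)[OF integrable_dual_fun] dual_mean_def)
    finally show ?thesis .
  qed
  then have "(\<integral>\<omega>. hindsight_opt T \<omega> \<partial>paths) / real T \<le> dual_min"
    unfolding dual_min_def using horizon
    by (intro cInf_greatest) (auto simp: divide_le_eq mult.commute intro: exI[of _ 0])
  then show ?thesis
    using horizon by (simp add: divide_le_eq mult.commute)
qed

lemma integrable_dual_at_price:
  assumes "t \<in> {1..T}"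
  shows "integrable paths (\<lambda>\<omega>. dual_fun (\<omega> t) (price \<omega> (t - 1)))"
proof (rule Paths.integrable_const_bound[where B="rb + (real CARD('m) * (real T * eta * (bb + ab))) * (ab + bb)"])
  show "AE \<omega> in paths. norm (dual_fun (\<omega> t) (price \<omega> (t - 1)))
      \<le> rb + real CARD('m) * (real T * eta * (bb + ab)) * (ab + bb)"
    using AE_bounded_path
  proof (rule eventually_mono)
    fix \<omega> :: "nat \<Rightarrow> 'm sample"
    assume path: "bounded_path \<omega>"
    have "\<bar>dual_fun (\<omega> t) (price \<omega> (t - 1))\<bar> \<le> rb + (\<Sum>j\<in>UNIV. \<bar>price \<omega> (t - 1) $ j\<bar>) * (ab + bb)"
      using bounded_pathD[OF path assms] by (intro abs_dual_fun_le) (auto intro: less_imp_le)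
    also have "(\<Sum>j\<in>UNIV. \<bar>price \<omega> (t - 1) $ j\<bar>) \<le> (\<Sum>j\<in>(UNIV::'m set). real T * eta * (bb + ab))"
    proof (rule sum_mono)
      fix j
      have "price \<omega> (t - 1) $ j \<le> real (t - 1) * eta * (bb + ab)"
        using assms by (intro price_le_elapsed[OF path]) auto
      also have "\<dots> \<le> real T * eta * (bb + ab)"
        using assms eta_pos ab_pos bb_pos by (intro mult_right_mono) auto
      finally show "\<bar>price \<omega> (t - 1) $ j\<bar> \<le> real T * eta * (bb + ab)"
        using price_nonneg[of "t - 1" \<omega> j] by simp
    qed
    then have "(\<Sum>j\<in>UNIV. \<bar>price \<omega> (t - 1) $ j\<bar>) * (ab + bb)
        \<le> real CARD('m) * (real T * eta * (bb + ab)) * (ab + bb)"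
      using ab_pos bb_pos by (intro mult_right_mono) auto
    finally show "norm (dual_fun (\<omega> t) (price \<omega> (t - 1)))
        \<le> rb + real CARD('m) * (real T * eta * (bb + ab)) * (ab + bb)"
      by simp
  qed
qed (simp add: dual_fun_def)

lemma integral_paths_split_coordinate:
  fixes F :: "(nat \<Rightarrow> 'm sample) \<Rightarrow> real"
  assumes F: "integrable paths F"
  shows "integrable (PiM (UNIV - {t}) (\<lambda>_. M)) (\<lambda>X. \<integral>x. F (X(t := x)) \<partial>M)"
    and "(\<integral>\<omega>. F \<omega> \<partial>paths) = (\<integral>X. (\<integral>x. F (X(t := x)) \<partial>M) \<partial>PiM (UNIV - {t}) (\<lambda>_. M))"
proof -
  let ?Rest = "PiM (UNIV - {t}) (\<lambda>_. M)"
  let ?N = "M \<Otimes>\<^sub>M ?Rest"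
  define insert_t where "insert_t = (\<lambda>p::'m sample \<times> (nat \<Rightarrow> 'm sample). (snd p)(t := fst p))"
  interpret N: pair_sigma_finite M ?Rest
    by (intro pair_sigma_finite.intro M.sigma_finite_measure_axioms prob_space_imp_sigma_finite
        prob_space_PiM prob_space_M)
  have insert_t_meas: "insert_t \<in> measurable ?N paths"
    unfolding insert_t_def by (rule measurable_fun_upd[where J="UNIV - {t}"]) auto
  have "distr ?N (PiM (insert t (UNIV - {t})) (\<lambda>_. M)) (\<lambda>(x, X). X(t := x))
      = PiM (insert t (UNIV - {t})) (\<lambda>_. M)"
    by (rule distr_pair_PiM_eq_PiM) (auto intro: prob_space_M)
  moreover have "(\<lambda>(x, X). X(t := x)) = insert_t"
    unfolding insert_t_def by (auto simp: fun_eq_iff)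
  ultimately have distr: "distr ?N paths insert_t = paths"
    by (simp add: insert_absorb)
  have F_meas: "F \<in> borel_measurable paths"
    using F by simp
  have F_insert_t: "(\<lambda>p. F (insert_t p)) = (\<lambda>(x, X). F (X(t := x)))"
    by (auto simp: insert_t_def fun_eq_iff)
  have int_N: "integrable ?N (\<lambda>(x, X). F (X(t := x)))"
    using integrable_distr_eq[OF insert_t_meas F_meas] distr F F_insert_t by simp
  then show "integrable ?Rest (\<lambda>X. \<integral>x. F (X(t := x)) \<partial>M)"
    by (rule N.integrable_snd)
  have "(\<integral>\<omega>. F \<omega> \<partial>paths) = (\<integral>p. F (insert_t p) \<partial>?N)"
    using integral_distr[OF insert_t_meas F_meas] distr by simp
  also have "\<dots> = (\<integral>X. (\<integral>x. F (X(t := x)) \<partial>M) \<partial>?Rest)"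
    unfolding F_insert_t by (rule N.integral_snd[OF int_N, symmetric])
  finally show "(\<integral>\<omega>. F \<omega> \<partial>paths) = (\<integral>X. (\<integral>x. F (X(t := x)) \<partial>M) \<partial>?Rest)" .
qed

text \<open>Since \<open>price \<omega> (t - 1)\<close> depends only on the samples before period \<open>t\<close>, integrating out
  \<open>\<omega> t\<close> first gives \<open>dual_mean (price \<omega> (t - 1)) \<ge> dual_min\<close>.\<close>

lemma expected_dual_at_price_ge:
  assumes t: "t \<in> {1..T}"
  shows "dual_min \<le> (\<integral>\<omega>. dual_fun (\<omega> t) (price \<omega> (t - 1)) \<partial>paths)"
proof -
  let ?F = "\<lambda>\<omega>. dual_fun (\<omega> t) (price \<omega> (t - 1))"
  interpret Rest: prob_space "PiM (UNIV - {t}) (\<lambda>_. M)"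
    by (rule prob_space_PiM) (rule prob_space_M)
  have past: "price (X(t := x)) (t - 1) = price X (t - 1)" for X x
  proof -
    have "alg_state rb ab bb bl 9 T (t - 1) (X(t := x)) = alg_state rb ab bb bl 9 T (t - 1) X"
      using t by (intro state_causal) auto
    then show ?thesis
      by simp
  qed
  note split = integral_paths_split_coordinate[OF integrable_dual_at_price[OF t], of t]
  have "integrable (PiM (UNIV - {t}) (\<lambda>_. M)) (\<lambda>X. dual_mean (price X (t - 1)))"
    using split(1) unfolding past fun_upd_same dual_mean_def .
  then have "dual_min \<le> (\<integral>X. dual_mean (price X (t - 1)) \<partial>PiM (UNIV - {t}) (\<lambda>_. M))"
    by (intro Rest.integral_ge_const AE_I2 dual_min_le) (simp_all add: price_nonneg)
  also have "\<dots> = (\<integral>\<omega>. ?F \<omega> \<partial>paths)"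
    using split(2) unfolding past fun_upd_same dual_mean_def ..
  finally show ?thesis .
qed

lemma indep_coordinates:
  assumes "finite I" "I \<noteq> {}"
  shows "Paths.indep_vars (\<lambda>_. M) (\<lambda>i \<omega>. \<omega> i) I"
proof (subst Paths.indep_vars_iff_distr_eq_PiM')
  have "distr paths (PiM I (\<lambda>_. M)) (\<lambda>x. restrict x I) = PiM I (\<lambda>_. M)"
    by (rule Paths.distr_PiM_restrict_finite) (use assms in auto)
  moreover have "PiM I (\<lambda>i. distr paths M (\<lambda>\<omega>. \<omega> i)) = PiM I (\<lambda>_. M)"
    by (rule PiM_cong) (auto intro: Paths.PiM_component)
  ultimately show "distr paths (PiM I (\<lambda>_. M)) (\<lambda>x. \<lambda>i\<in>I. x i) = PiM I (\<lambda>i. distr paths M (\<lambda>\<omega>. \<omega> i))"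
    by (simp add: restrict_def)
qed (use assms in auto)

definition low_replenishment :: "'m \<Rightarrow> nat set \<Rightarrow> (nat \<Rightarrow> 'm sample) set" where
  "low_replenishment j I = {\<omega> \<in> space paths. (\<Sum>t\<in>I. repl (\<omega> t) $ j) < real (card I) * (bl / 2)}"

lemma low_replenishment_sets: "low_replenishment j I \<in> sets paths"
  unfolding low_replenishment_def by measurable

lemma Hoeffding_repl:
  assumes I: "finite I" "I \<noteq> {}" and \<epsilon>: "0 \<le> \<epsilon>"
  shows "Paths.prob {\<omega> \<in> space paths. (\<Sum>t\<in>I. repl (\<omega> t) $ j) \<le> real (card I) * (\<integral>z. repl z $ j \<partial>M) - \<epsilon>}
    \<le> exp (-2 * \<epsilon>\<^sup>2 / (real (card I) * bb\<^sup>2))"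
proof -
  define X where "X = (\<lambda>i (\<omega>::nat \<Rightarrow> 'm sample). repl (\<omega> i) $ j)"
  define Y where "Y = (\<lambda>\<omega>::nat \<Rightarrow> 'm sample. repl (\<omega> 0) $ j)"
  have repl_meas: "(\<lambda>z::'m sample. repl z $ j) \<in> measurable M borel"
    unfolding measurable_from_M by measurable
  have distr_X: "distr paths borel (X i) = distr M borel (\<lambda>z. repl z $ j)" for i
  proof -
    have "distr paths borel (X i) = distr (distr paths M (\<lambda>\<omega>. \<omega> i)) borel (\<lambda>z. repl z $ j)"
      unfolding X_def by (subst distr_distr) (auto simp: comp_def intro: repl_meas)
    also have "distr paths M (\<lambda>\<omega>. \<omega> i) = M"
      by (rule Paths.PiM_component) simp
    finally show ?thesis .
  qed
  interpret Hoeffding: Hoeffding_ineq_iid paths I X Y 0 bb "Paths.expectation Y"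
  proof unfold_locales
    show "Paths.indep_vars (\<lambda>_. borel) X I"
      unfolding X_def by (rule Paths.indep_vars_compose2[OF indep_coordinates[OF I]]) (rule repl_meas)
    show "distr paths borel (X i) = distr paths borel Y" for i
      using distr_X[of i] distr_X[of 0] by (simp add: X_def Y_def)
    have "AE \<omega> in paths. bounded_sample rb ab bb (\<omega> 0)"
      by (rule AE_PiM_component[OF prob_space_M]) (use AE_bounded_sample in auto)
    then show "AE \<omega> in paths. Y \<omega> \<in> {0..bb}"
      unfolding Y_def by (rule eventually_mono) (auto simp: bounded_sample_def less_imp_le)
  qed (auto simp: I Y_def)
  have "integrable M (\<lambda>z. repl z $ j)"
    using repl_meas
    by (intro M.integrable_const_bound[where B=bb] eventually_mono[OF AE_bounded_sample])
       (auto simp: bounded_sample_def less_imp_le)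
  then have "Paths.expectation Y = (\<integral>z. repl z $ j \<partial>M)"
    unfolding Y_def by (rule integral_coordinate(2))
  then show ?thesis
    using Hoeffding.Hoeffding_ineq_le[OF \<epsilon>] bb_pos I by (simp add: X_def)
qed

lemma prob_low_replenishment_le:
  assumes I: "finite I"
  shows "Paths.prob (low_replenishment j I) \<le> exp (- real (card I) * bl\<^sup>2 / (2 * bb\<^sup>2))"
proof (cases "I = {}")
  case False
  define n where "n = real (card I)"
  have n: "0 < n"
    unfolding n_def using I False by (simp add: card_gt_0_iff)
  define \<epsilon> where "\<epsilon> = n * ((\<integral>z. repl z $ j \<partial>M) - bl / 2)"
  have \<epsilon>: "n * (bl / 2) \<le> \<epsilon>"
    unfolding \<epsilon>_def using n mean_repl_gt[of j] by (simp add: mult_left_mono)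
  have "Paths.prob (low_replenishment j I)
      \<le> Paths.prob {\<omega> \<in> space paths. (\<Sum>t\<in>I. repl (\<omega> t) $ j) \<le> real (card I) * (\<integral>z. repl z $ j \<partial>M) - \<epsilon>}"
    by (rule Paths.finite_measure_mono) (auto simp: low_replenishment_def \<epsilon>_def n_def algebra_simps)
  also have "\<dots> \<le> exp (-2 * \<epsilon>\<^sup>2 / (n * bb\<^sup>2))"
    unfolding n_def using \<epsilon> mult_pos_pos[OF n, of "bl / 2"] bl_pos by (intro Hoeffding_repl I False) auto
  also have "\<dots> \<le> exp (- n * bl\<^sup>2 / (2 * bb\<^sup>2))"
  proof -
    have "(n * (bl / 2))\<^sup>2 \<le> \<epsilon>\<^sup>2"
      using \<epsilon> n bl_pos by (intro power_mono) auto
    then have "2 * (n * (bl / 2))\<^sup>2 / (n * bb\<^sup>2) \<le> 2 * \<epsilon>\<^sup>2 / (n * bb\<^sup>2)"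
      using n bb_pos by (intro divide_right_mono) auto
    moreover have "2 * (n * (bl / 2))\<^sup>2 / (n * bb\<^sup>2) = n * bl\<^sup>2 / (2 * bb\<^sup>2)"
      using n bb_pos by (simp add: power2_eq_square field_simps)
    ultimately show ?thesis
      by simp
  qed
  finally show ?thesis
    unfolding n_def .
qed (simp add: low_replenishment_def)

definition bad_event :: "nat \<Rightarrow> (nat \<Rightarrow> 'm sample) set" where
  "bad_event L = (\<Union>j. \<Union>u\<in>{1..T + 1 - L}. low_replenishment j {u..<u + L})
     \<union> (\<Union>j. low_replenishment j {1..warmup})"

lemma bad_event_sets: "bad_event L \<in> sets paths"
  unfolding bad_event_def by (intro sets.Un sets.countable_UN' sets.finite_UN low_replenishment_sets) auto

lemma good_outside_bad_event:
  assumes "\<omega> \<in> space paths" "\<omega> \<notin> bad_event L"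
  shows "replenished_windows \<omega> L" "warmup_replenished \<omega>"
  using assms by (auto simp: bad_event_def low_replenishment_def replenished_windows_def
      warmup_replenished_def not_less)

lemma prob_low_window_le:
  "Paths.prob (\<Union>u\<in>{1..T + 1 - L}. low_replenishment j {u..<u + L})
    \<le> (real T + 1) * exp (- real L * bl\<^sup>2 / (2 * bb\<^sup>2))"
proof -
  let ?U = "{1..T + 1 - L}"
  have "Paths.prob (\<Union>u\<in>?U. low_replenishment j {u..<u + L}) \<le> (\<Sum>u\<in>?U. Paths.prob (low_replenishment j {u..<u + L}))"
    by (rule Paths.finite_measure_subadditive_finite) (auto intro: low_replenishment_sets)
  also have "\<dots> \<le> (\<Sum>u\<in>?U. exp (- real L * bl\<^sup>2 / (2 * bb\<^sup>2)))"
    using prob_low_replenishment_le[of "{u..<u + L}" j for u] by (intro sum_mono) simp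
  also have "\<dots> = real (T + 1 - L) * exp (- real L * bl\<^sup>2 / (2 * bb\<^sup>2))"
    by simp
  also have "\<dots> \<le> (real T + 1) * exp (- real L * bl\<^sup>2 / (2 * bb\<^sup>2))"
    by (intro mult_right_mono) auto
  finally show ?thesis .
qed

lemma prob_bad_event_le:
  "Paths.prob (bad_event L) \<le> real CARD('m) * (real T + 1) * exp (- real L * bl\<^sup>2 / (2 * bb\<^sup>2))
     + real CARD('m) * exp (- real warmup * bl\<^sup>2 / (2 * bb\<^sup>2))"
proof -
  let ?windows = "\<Union>j. \<Union>u\<in>{1..T + 1 - L}. low_replenishment j {u..<u + L}"
    and ?initial = "\<Union>j. low_replenishment j {1..warmup}"
  have "Paths.prob ?windows \<le> (\<Sum>j\<in>UNIV. Paths.prob (\<Union>u\<in>{1..T + 1 - L}. low_replenishment j {u..<u + L}))"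
    by (rule Paths.finite_measure_subadditive_finite) (auto intro!: sets.finite_UN low_replenishment_sets)
  also have "\<dots> \<le> (\<Sum>j\<in>(UNIV::'m set). (real T + 1) * exp (- real L * bl\<^sup>2 / (2 * bb\<^sup>2)))"
    by (rule sum_mono) (rule prob_low_window_le)
  finally have windows: "Paths.prob ?windows
      \<le> real CARD('m) * ((real T + 1) * exp (- real L * bl\<^sup>2 / (2 * bb\<^sup>2)))"
    by simp
  have "Paths.prob ?initial \<le> (\<Sum>j\<in>UNIV. Paths.prob (low_replenishment j {1..warmup}))"
    by (rule Paths.finite_measure_subadditive_finite) (auto intro: low_replenishment_sets)
  also have "\<dots> \<le> (\<Sum>j\<in>(UNIV::'m set). exp (- real warmup * bl\<^sup>2 / (2 * bb\<^sup>2)))"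
    using prob_low_replenishment_le[of "{1..warmup}"] by (intro sum_mono) simp
  finally have initial: "Paths.prob ?initial \<le> real CARD('m) * exp (- real warmup * bl\<^sup>2 / (2 * bb\<^sup>2))"
    by simp
  have "Paths.prob (bad_event L) \<le> Paths.prob ?windows + Paths.prob ?initial"
    unfolding bad_event_def
    by (rule measure_Un_le) (auto intro!: sets.finite_UN sets.countable_UN' low_replenishment_sets)
  with windows initial show ?thesis
    by (simp add: mult.assoc)
qed

lemma alg_reward_AE_ge:
  assumes L: "1 \<le> L" and enough: "sqrt (potential_bound L) / eta + ab \<le> real warmup * (bl / 2)"
  shows "AE \<omega> in paths. (\<Sum>t\<in>{warmup<..T}. dual_fun (\<omega> t) (price \<omega> (t - 1)))
      - real (T - warmup) * eta * grad_bound / 2 - real T * rb * indicator (bad_event L) \<omega>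
    \<le> alg_reward rb ab bb bl 9 T \<omega>"
  using AE_bounded_path AE_space
proof eventually_elim
  case (elim \<omega>)
  show ?case
  proof (cases "\<omega> \<in> bad_event L")
    case True
    then show ?thesis
      using dual_reward_ge[OF elim(1)] alg_reward_ge[OF elim(1)] by simp
  next
    case False
    have "\<forall>t\<in>{warmup<..T}. dec \<omega> t = dual_dec \<omega> t"
      using dec_eq_dual_dec[OF elim(1) L good_outside_bad_event[OF elim(2) False] enough] by blast
    then show ?thesis
      using dual_reward_ge[OF elim(1)] False by (simp add: alg_reward_after_warmup)
  qed
qed

lemma expected_alg_reward_ge:
  assumes L: "1 \<le> L" and enough: "sqrt (potential_bound L) / eta + ab \<le> real warmup * (bl / 2)"
  shows "real (T - warmup) * dual_min - real T * eta * grad_bound / 2 - real T * rb * Paths.prob (bad_event L)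
    \<le> (\<integral>\<omega>. alg_reward rb ab bb bl 9 T \<omega> \<partial>paths)"
proof -
  let ?D = "\<lambda>\<omega>. \<Sum>t\<in>{warmup<..T}. dual_fun (\<omega> t) (price \<omega> (t - 1))"
  let ?c = "real (T - warmup) * eta * grad_bound / 2"
  have int_D: "integrable paths ?D"
    by (intro Bochner_Integration.integrable_sum integrable_dual_at_price) auto
  have int_bad: "integrable paths (\<lambda>\<omega>. real T * rb * indicator (bad_event L) \<omega>)"
    using bad_event_sets by (intro integrable_mult_right integrable_real_indicator)
      (auto simp: Paths.emeasure_eq_measure)
  have "(\<integral>\<omega>. ?D \<omega> - ?c - real T * rb * indicator (bad_event L) \<omega> \<partial>paths)
      \<le> (\<integral>\<omega>. alg_reward rb ab bb bl 9 T \<omega> \<partial>paths)"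
    using int_D int_bad by (intro integral_mono_AE alg_reward_AE_ge[OF L enough] integrable_alg_reward) auto
  moreover have "(\<integral>\<omega>. ?D \<omega> - ?c - real T * rb * indicator (bad_event L) \<omega> \<partial>paths)
      = (\<Sum>t\<in>{warmup<..T}. (\<integral>\<omega>. dual_fun (\<omega> t) (price \<omega> (t - 1)) \<partial>paths)) - ?c
        - real T * rb * Paths.prob (bad_event L)"
    using int_D int_bad bad_event_sets integrable_dual_at_price Paths.prob_space_axioms
    by (simp add: prob_space.prob_space Bochner_Integration.integral_sum Bochner_Integration.integral_diff)
  moreover have "real (T - warmup) * dual_min
      \<le> (\<Sum>t\<in>{warmup<..T}. (\<integral>\<omega>. dual_fun (\<omega> t) (price \<omega> (t - 1)) \<partial>paths))"
    using sum_mono[of "{warmup<..T}" "\<lambda>_. dual_min"] expected_dual_at_price_ge by force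
  moreover have "?c \<le> real T * eta * grad_bound / 2"
    using eta_pos grad_bound_nonneg by (intro divide_right_mono mult_right_mono) auto
  ultimately show ?thesis
    by linarith
qed

lemma regret_le:
  assumes L: "1 \<le> L" and enough: "sqrt (potential_bound L) / eta + ab \<le> real warmup * (bl / 2)"
  shows "(\<integral>\<omega>. hindsight_opt T \<omega> - alg_reward rb ab bb bl 9 T \<omega> \<partial>paths)
    \<le> real warmup * rb + real T * eta * grad_bound / 2 + real T * rb * Paths.prob (bad_event L)"
proof -
  have "real T * dual_min - real (T - warmup) * dual_min \<le> real warmup * dual_min"
    using dual_min_nonneg by (simp add: left_diff_distrib[symmetric] mult_right_mono)
  also have "\<dots> \<le> real warmup * rb"
    using dual_min_le_rb by (intro mult_left_mono) auto
  finally have "real T * dual_min - real (T - warmup) * dual_min \<le> real warmup * rb" .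
  moreover have "(\<integral>\<omega>. hindsight_opt T \<omega> - alg_reward rb ab bb bl 9 T \<omega> \<partial>paths)
      = (\<integral>\<omega>. hindsight_opt T \<omega> \<partial>paths) - (\<integral>\<omega>. alg_reward rb ab bb bl 9 T \<omega> \<partial>paths)"
    by (rule Bochner_Integration.integral_diff[OF integrable_hindsight_opt integrable_alg_reward])
  ultimately show ?thesis
    using expected_hindsight_opt_le expected_alg_reward_ge[OF L enough] by linarith
qed

end

section \<open>The regret bound for large horizons\<close>

context online_policy
begin

text \<open>\<open>window_const\<close> makes the Hoeffding bound \<open>exp (- L * bl\<^sup>2 / (2 * bb\<^sup>2))\<close> for a window
  of length \<open>L = window_length\<close> at most \<open>T\<^sup>-\<^sup>3\<close>.\<close>

definition window_const :: real where
  "window_const = 6 * bb\<^sup>2 / bl\<^sup>2"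

definition window_length :: nat where
  "window_length = nat \<lceil>window_const * ln (real T)\<rceil>"

definition large_horizon :: bool where
  "large_horizon \<longleftrightarrow> 1 \<le> ln (real T)
     \<and> sqrt (real CARD('m)) * (eta * grad_bound / bl + (window_const * (ln (real T) * eta) + eta) * (bb + ab)) \<le> 1
     \<and> (window_const * (ln (real T) * eta) + eta) * (2 * rb + eta * grad_bound) \<le> 1
     \<and> eta * ab \<le> 1
     \<and> 3 * (ln (real T) * eta) * bb\<^sup>2 \<le> 4 * bl"

definition regret_const :: real where
  "regret_const = (12 * alg_W CARD('m) rb ab bb bl / bl + 1) * rb + grad_bound + real CARD('m) * rb"

end

lemma tendsto_eta: "(online_policy.eta \<longlongrightarrow> 0) sequentially"
proof -
  have "((\<lambda>x::real. 1 / sqrt (9 * x * ln x)) \<longlongrightarrow> 0) at_top"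
    by real_asymp
  from filterlim_compose[OF this filterlim_real_sequentially] show ?thesis
    by (simp add: online_policy.eta_def[abs_def])
qed

lemma tendsto_ln_mult_eta: "((\<lambda>T. ln (real T) * online_policy.eta T) \<longlongrightarrow> 0) sequentially"
proof -
  have "((\<lambda>x::real. ln x * (1 / sqrt (9 * x * ln x))) \<longlongrightarrow> 0) at_top"
    by real_asymp
  from filterlim_compose[OF this filterlim_real_sequentially] show ?thesis
    by (simp add: online_policy.eta_def)
qed

lemma eventually_one_le_ln: "\<forall>\<^sub>F T in sequentially. 1 \<le> ln (real T)"
proof -
  have "\<forall>\<^sub>F x in at_top. 1 \<le> ln (x::real)"
    by real_asymp
  then show ?thesis
    by (rule eventually_compose_filterlim[OF _ filterlim_real_sequentially])
qed

lemma eventually_large_horizon: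
  assumes "0 < bl"
  shows "\<forall>\<^sub>F T in sequentially. online_policy.large_horizon TYPE('m::finite) rb ab bb bl T"
proof -
  let ?eta = "online_policy.eta" and ?D = "online_policy.grad_bound TYPE('m) ab bb"
    and ?c = "online_policy.window_const bb bl"
  define log_eta where "log_eta T = ln (real T) * ?eta T" for T
  have eta: "(?eta \<longlongrightarrow> 0) sequentially" and log_eta: "(log_eta \<longlongrightarrow> 0) sequentially"
    using tendsto_eta tendsto_ln_mult_eta by (simp_all add: log_eta_def[abs_def])
  have "((\<lambda>T. ?eta T * ?D / bl + (?c * log_eta T + ?eta T) * (bb + ab)) \<longlongrightarrow> 0) sequentially"
    using eta log_eta assms by (auto intro!: tendsto_eq_intros)
  from order_tendstoD(2)[OF tendsto_mult_right_zero[OF this] zero_less_one]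
  have cap: "\<forall>\<^sub>F T in sequentially.
      sqrt (real CARD('m)) * (?eta T * ?D / bl + (?c * log_eta T + ?eta T) * (bb + ab)) < 1" .
  have "((\<lambda>T. (?c * log_eta T + ?eta T) * (2 * rb + ?eta T * ?D)) \<longlongrightarrow> 0) sequentially"
    using eta log_eta by (auto intro!: tendsto_eq_intros)
  from order_tendstoD(2)[OF this zero_less_one]
  have drift: "\<forall>\<^sub>F T in sequentially. (?c * log_eta T + ?eta T) * (2 * rb + ?eta T * ?D) < 1" .
  have "((\<lambda>T. ?eta T * ab) \<longlongrightarrow> 0) sequentially"
    using eta by (auto intro!: tendsto_eq_intros)
  from order_tendstoD(2)[OF this zero_less_one]
  have step: "\<forall>\<^sub>F T in sequentially. ?eta T * ab < 1" .
  have "((\<lambda>T. 3 * log_eta T * bb\<^sup>2) \<longlongrightarrow> 0) sequentially"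
    using log_eta by (auto intro!: tendsto_eq_intros)
  from order_tendstoD(2)[OF this, of "4 * bl"] assms
  have log_step: "\<forall>\<^sub>F T in sequentially. 3 * log_eta T * bb\<^sup>2 < 4 * bl"
    by simp
  from eventually_one_le_ln cap drift step log_step show ?thesis
    unfolding online_policy.large_horizon_def log_eta_def by eventually_elim auto
qed

lemma exp_neg_three_ln:
  fixes x :: real
  assumes "0 < x"
  shows "exp (- (3 * ln x)) = 1 / x ^ 3"
proof -
  have "exp (3 * ln x) = exp (ln x) ^ 3"
    by (metis exp_of_nat_mult of_nat_numeral)
  also have "\<dots> = x ^ 3"
    using assms by simp
  finally show ?thesis
    by (simp add: exp_minus inverse_eq_divide)
qed

lemma half_le_sqrt_mult_ln:
  assumes "2 \<le> x"
  shows "1 / 2 \<le> sqrt x * ln (x::real)"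
proof -
  have "exp 1 \<le> (4::real)"
    using exp_le by simp
  then have "1 \<le> ln (4::real)"
    by (simp add: ln_ge_iff)
  also have "ln (4::real) = 2 * ln 2"
    using ln_realpow[of 2 2] by simp
  also have "ln 2 \<le> ln x"
    using assms by simp
  finally have "1 / 2 \<le> ln x"
    by simp
  moreover have "1 \<le> sqrt x"
    using assms by simp
  ultimately show ?thesis
    using mult_mono[of 1 "sqrt x" "1 / 2" "ln x"] by simp
qed

context bounded_policy
begin

lemma horizon_scale:
  assumes "large_horizon"
  shows "1 \<le> sqrt (real T) * ln (real T)"
    and "sqrt (real T * ln (real T)) \<le> sqrt (real T) * ln (real T)"
    and "real T * eta \<le> sqrt (real T) * ln (real T)"
proof -
  have log: "1 \<le> ln (real T)" and T: "1 \<le> sqrt (real T)"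
    using assms horizon by (simp_all add: large_horizon_def)
  show "1 \<le> sqrt (real T) * ln (real T)"
    using mult_mono[OF T log] by simp
  have "sqrt (ln (real T)) \<le> ln (real T)"
    using log by (simp add: real_sqrt_le_iff real_le_lsqrt power2_eq_square)
  then show "sqrt (real T * ln (real T)) \<le> sqrt (real T) * ln (real T)"
    by (simp add: real_sqrt_mult mult_left_mono)
  have "sqrt (real T) \<le> sqrt (9 * real T * ln (real T))"
    using log horizon by (intro real_sqrt_le_mono) (simp add: mult_le_cancel_left1)
  then have "real T * eta \<le> real T / sqrt (real T)"
    using horizon by (simp add: eta_def frac_le)
  also have "\<dots> = sqrt (real T)"
    by (simp add: real_div_sqrt)
  also have "\<dots> \<le> sqrt (real T) * ln (real T)"
    using log by (simp add: mult_le_cancel_left1)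
  finally show "real T * eta \<le> sqrt (real T) * ln (real T)" .
qed

lemma alg_W_ge: "2 + 8 * sqrt (real CARD('m)) * rb / bl \<le> alg_W CARD('m) rb ab bb bl"
  unfolding alg_W_def by (meson add_left_mono le_of_int_ceiling max.cobounded1 order_trans)

lemma alg_W_ge_two: "2 \<le> alg_W CARD('m) rb ab bb bl"
proof -
  have "0 \<le> 8 * sqrt (real CARD('m)) * rb / bl"
    using rb_pos bl_pos by simp
  then show ?thesis
    using alg_W_ge by linarith
qed

lemma regret_const_nonneg: "0 \<le> regret_const"
proof -
  have "0 \<le> 12 * alg_W CARD('m) rb ab bb bl / bl + 1"
    using alg_W_ge_two bl_pos by simp
  then show ?thesis
    unfolding regret_const_def using rb_pos grad_bound_nonneg by simp
qed

lemma sqrt_horizon_eq: "sqrt (9 * real T * ln (real T)) = 1 / eta"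
  unfolding eta_def using horizon by simp

lemma warmup_ge: "4 * alg_W CARD('m) rb ab bb bl / (eta * bl) \<le> real warmup"
proof -
  have "4 * alg_W CARD('m) rb ab bb bl / (eta * bl) = 4 * alg_W CARD('m) rb ab bb bl * sqrt (9 * real T * ln (real T)) / bl"
    by (simp add: sqrt_horizon_eq)
  also have "\<dots> \<le> real_of_int (alg_kappa CARD('m) rb ab bb bl 9 T)"
    unfolding alg_kappa_def by simp
  also have "\<dots> \<le> real warmup"
    unfolding warmup_def by simp
  finally show ?thesis .
qed

lemma warmup_le: "real warmup \<le> 12 * alg_W CARD('m) rb ab bb bl * sqrt (real T * ln (real T)) / bl + 1"
proof -
  have "0 \<le> alg_W CARD('m) rb ab bb bl"
    using alg_W_ge_two by linarith
  then have "0 \<le> 4 * alg_W CARD('m) rb ab bb bl * sqrt (9 * real T * ln (real T)) / bl"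
    using bl_pos horizon by simp
  then have "real warmup \<le> 4 * alg_W CARD('m) rb ab bb bl * sqrt (9 * real T * ln (real T)) / bl + 1"
    unfolding warmup_def alg_kappa_def by linarith
  also have "sqrt (9 * real T * ln (real T)) = 3 * sqrt (real T * ln (real T))"
    by (simp add: real_sqrt_mult)
  finally show ?thesis
    by simp
qed

lemma window_length_bounds:
  assumes "large_horizon"
  shows "1 \<le> window_length" "window_const * ln (real T) \<le> real window_length"
    "real window_length * eta \<le> window_const * (ln (real T) * eta) + eta"
proof -
  have "0 < window_const * ln (real T)"
    using assms bb_pos bl_pos by (simp add: large_horizon_def window_const_def)
  then have "1 \<le> \<lceil>window_const * ln (real T)\<rceil>"
    by (simp add: one_le_ceiling)
  then show "1 \<le> window_length" "window_const * ln (real T) \<le> real window_length"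
    unfolding window_length_def by linarith+
  have "real window_length \<le> window_const * ln (real T) + 1"
    unfolding window_length_def using \<open>0 < window_const * ln (real T)\<close> by linarith
  then have "real window_length * eta \<le> (window_const * ln (real T) + 1) * eta"
    using eta_pos by (intro mult_right_mono) auto
  then show "real window_length * eta \<le> window_const * (ln (real T) * eta) + eta"
    by (simp add: algebra_simps)
qed

lemma sqrt_potential_bound_le:
  assumes large: "large_horizon"
  shows "sqrt (potential_bound window_length) \<le> 2 * sqrt (real CARD('m)) * rb / bl + 1"
proof -
  let ?L = window_length and ?m = "real CARD('m)" and ?H = "2 * sqrt (real CARD('m)) * rb / bl + 1"
  have window: "real ?L * eta \<le> window_const * (ln (real T) * eta) + eta"
    by (rule window_length_bounds(3)[OF large])
  have "sqrt ?m * price_cap ?L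
      = 2 * sqrt ?m * rb / bl + sqrt ?m * (eta * grad_bound / bl + (real ?L * eta) * (bb + ab))"
    using bl_pos by (simp add: price_cap_def price_floor_def field_simps)
  also have "\<dots> \<le> 2 * sqrt ?m * rb / bl
      + sqrt ?m * (eta * grad_bound / bl + (window_const * (ln (real T) * eta) + eta) * (bb + ab))"
    using window ab_pos bb_pos by (intro add_left_mono mult_left_mono mult_right_mono) auto
  also have "\<dots> \<le> ?H"
    using large unfolding large_horizon_def by linarith
  finally have "sqrt ?m * price_cap ?L \<le> ?H" .
  moreover have "0 \<le> sqrt ?m * price_cap ?L"
    using price_floor_pos eta_pos ab_pos bb_pos by (simp add: price_cap_def)
  ultimately have "?m * (price_cap ?L)\<^sup>2 \<le> ?H\<^sup>2"
    by (metis power_mono power_mult_distrib real_sqrt_pow2 of_nat_0_le_iff)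
  moreover have "real ?L * (2 * eta * rb + eta\<^sup>2 * grad_bound) \<le> ?H\<^sup>2"
  proof -
    have "real ?L * (2 * eta * rb + eta\<^sup>2 * grad_bound) = (real ?L * eta) * (2 * rb + eta * grad_bound)"
      by (simp add: power2_eq_square algebra_simps)
    also have "\<dots> \<le> (window_const * (ln (real T) * eta) + eta) * (2 * rb + eta * grad_bound)"
      using window eta_pos rb_pos grad_bound_nonneg by (intro mult_right_mono) auto
    also have "\<dots> \<le> 1"
      using large unfolding large_horizon_def by linarith
    also have "1 \<le> ?H\<^sup>2"
      using rb_pos bl_pos by (intro one_le_power) simp
    finally show ?thesis .
  qed
  ultimately have "potential_bound ?L \<le> ?H\<^sup>2"
    unfolding potential_bound_def by simp
  then show ?thesis
    using rb_pos bl_pos by (simp add: real_sqrt_le_iff real_le_lsqrt)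
qed

lemma warmup_enough:
  assumes large: "large_horizon"
  shows "sqrt (potential_bound window_length) / eta + ab \<le> real warmup * (bl / 2)"
proof -
  let ?W = "alg_W CARD('m) rb ab bb bl"
  have "0 \<le> sqrt (real CARD('m)) * rb / bl"
    using rb_pos bl_pos by simp
  then have "sqrt (potential_bound window_length) + eta * ab \<le> ?W"
    using sqrt_potential_bound_le[OF large] large alg_W_ge
    unfolding large_horizon_def by linarith
  then have "(sqrt (potential_bound window_length) + eta * ab) / eta \<le> ?W / eta"
    using eta_pos by (intro divide_right_mono) auto
  then have "sqrt (potential_bound window_length) / eta + ab \<le> ?W / eta"
    using eta_pos by (simp add: add_divide_distrib)
  also have "\<dots> \<le> 4 * ?W / (eta * bl) * (bl / 2)"
    using eta_pos bl_pos alg_W_ge_two by (simp add: field_simps)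
  also have "\<dots> \<le> real warmup * (bl / 2)"
    using warmup_ge bl_pos by (intro mult_right_mono) auto
  finally show ?thesis .
qed

lemma exp_window_le:
  assumes "large_horizon"
  shows "exp (- real window_length * bl\<^sup>2 / (2 * bb\<^sup>2)) \<le> 1 / real T ^ 3"
proof -
  have "3 * ln (real T) = window_const * ln (real T) * bl\<^sup>2 / (2 * bb\<^sup>2)"
    using bl_pos bb_pos by (simp add: window_const_def field_simps)
  also have "\<dots> \<le> real window_length * bl\<^sup>2 / (2 * bb\<^sup>2)"
    using window_length_bounds(2)[OF assms] by (intro divide_right_mono mult_right_mono) auto
  finally have "exp (- real window_length * bl\<^sup>2 / (2 * bb\<^sup>2)) \<le> exp (- (3 * ln (real T)))"
    by simp
  then show ?thesis
    using horizon exp_neg_three_ln[of "real T"] by simp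
qed

lemma exp_warmup_le:
  assumes "large_horizon"
  shows "exp (- real warmup * bl\<^sup>2 / (2 * bb\<^sup>2)) \<le> 1 / real T ^ 3"
proof -
  let ?W = "alg_W CARD('m) rb ab bb bl"
  have "2 \<le> ?W"
    by (rule alg_W_ge_two)
  have "3 * ln (real T) \<le> 4 * bl / (eta * bb\<^sup>2)"
    using assms eta_pos bb_pos unfolding large_horizon_def by (simp add: field_simps)
  also have "\<dots> \<le> 2 * ?W * bl / (eta * bb\<^sup>2)"
    using \<open>2 \<le> ?W\<close> eta_pos bb_pos bl_pos by (intro divide_right_mono) auto
  also have "\<dots> = 4 * ?W / (eta * bl) * bl\<^sup>2 / (2 * bb\<^sup>2)"
    using bl_pos eta_pos bb_pos by (simp add: power2_eq_square field_simps)
  also have "\<dots> \<le> real warmup * bl\<^sup>2 / (2 * bb\<^sup>2)"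
    using warmup_ge by (intro divide_right_mono mult_right_mono) auto
  finally have "exp (- real warmup * bl\<^sup>2 / (2 * bb\<^sup>2)) \<le> exp (- (3 * ln (real T)))"
    by simp
  then show ?thesis
    using horizon exp_neg_three_ln[of "real T"] by simp
qed

end

context iid_policy
begin

lemma regret_le_trivial:
  "(\<integral>\<omega>. hindsight_opt T \<omega> - alg_reward rb ab bb bl 9 T \<omega> \<partial>paths) \<le> 2 * real T * rb"
proof -
  have "(\<integral>\<omega>. hindsight_opt T \<omega> - alg_reward rb ab bb bl 9 T \<omega> \<partial>paths) \<le> (\<integral>\<omega>. 2 * real T * rb \<partial>paths)"
    using integrable_hindsight_opt integrable_alg_reward
  proof (intro integral_mono_AE eventually_mono[OF AE_bounded_path])
    fix \<omega> :: "nat \<Rightarrow> 'm sample"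
    assume path: "bounded_path \<omega>"
    then have "\<bar>hindsight_opt T \<omega>\<bar> \<le> real T * rb"
      by (intro abs_hindsight_opt_le) (auto simp: bounded_sample_def less_imp_le)
    with abs_alg_reward_le[OF path]
    show "hindsight_opt T \<omega> - alg_reward rb ab bb bl 9 T \<omega> \<le> 2 * real T * rb"
      by linarith
  qed auto
  then show ?thesis
    using Paths.prob_space_axioms by (simp add: prob_space.prob_space)
qed

lemma bad_event_cost_le:
  assumes large: "large_horizon"
  shows "real T * rb * Paths.prob (bad_event window_length) \<le> real CARD('m) * rb"
proof -
  have T: "0 < real T"
    using horizon by simp
  have "Paths.prob (bad_event window_length) \<le> real CARD('m) * (real T + 1) * (1 / real T ^ 3)
      + real CARD('m) * (1 / real T ^ 3)"
    using prob_bad_event_le[of window_length] exp_window_le[OF large] exp_warmup_le[OF large]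
    by (smt (verit) mult_left_mono of_nat_0_le_iff mult_nonneg_nonneg)
  also have "\<dots> = real CARD('m) * ((real T + 2) / real T ^ 3)"
    using T by (simp add: field_simps)
  finally have "real T * rb * Paths.prob (bad_event window_length)
      \<le> real T * rb * (real CARD('m) * ((real T + 2) / real T ^ 3))"
    using T rb_pos by (intro mult_left_mono) auto
  also have "\<dots> = real CARD('m) * rb * ((real T + 2) / (real T)\<^sup>2)"
    using T by (simp add: power2_eq_square power3_eq_cube field_simps)
  also have "\<dots> \<le> real CARD('m) * rb"
  proof -
    have "2 * real T \<le> real T * real T"
      using horizon by (intro mult_right_mono) auto
    then have "real T + 2 \<le> (real T)\<^sup>2"
      unfolding power2_eq_square using horizon by linarith
    then have "(real T + 2) / (real T)\<^sup>2 \<le> 1"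
      using T by simp
    then show ?thesis
      using rb_pos by (intro mult_left_le) auto
  qed
  finally show ?thesis .
qed

lemma regret_le_large_horizon:
  assumes large: "large_horizon"
  shows "(\<integral>\<omega>. hindsight_opt T \<omega> - alg_reward rb ab bb bl 9 T \<omega> \<partial>paths)
    \<le> regret_const * (sqrt (real T) * ln (real T))"
proof -
  let ?S = "sqrt (real T) * ln (real T)" and ?W = "alg_W CARD('m) rb ab bb bl"
  have S: "1 \<le> ?S"
    by (rule horizon_scale(1)[OF large])
  have "real warmup * rb \<le> (12 * ?W * sqrt (real T * ln (real T)) / bl + 1) * rb"
    using warmup_le rb_pos by (intro mult_right_mono) auto
  also have "\<dots> \<le> (12 * ?W * ?S / bl + 1) * rb"
    using horizon_scale(2)[OF large] alg_W_ge_two bl_pos rb_pos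
    by (intro mult_right_mono add_right_mono divide_right_mono mult_left_mono) auto
  finally have warmup_cost: "real warmup * rb \<le> 12 * ?W / bl * rb * ?S + rb"
    by (simp add: algebra_simps)
  have "real T * eta * grad_bound \<le> ?S * grad_bound"
    using horizon_scale(3)[OF large] grad_bound_nonneg by (rule mult_right_mono)
  moreover have "0 \<le> ?S * grad_bound"
    using S grad_bound_nonneg by simp
  ultimately have descent_cost: "real T * eta * grad_bound / 2 \<le> grad_bound * ?S"
    by (simp add: mult.commute)
  have "(\<integral>\<omega>. hindsight_opt T \<omega> - alg_reward rb ab bb bl 9 T \<omega> \<partial>paths)
      \<le> real warmup * rb + real T * eta * grad_bound / 2 + real T * rb * Paths.prob (bad_event window_length)"
    by (rule regret_le[OF window_length_bounds(1)[OF large] warmup_enough[OF large]])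
  also have "\<dots> \<le> 12 * ?W / bl * rb * ?S + rb + grad_bound * ?S + real CARD('m) * rb"
    using warmup_cost descent_cost bad_event_cost_le[OF large] by linarith
  also have "\<dots> \<le> regret_const * ?S"
    using S rb_pos mult_left_mono[OF S, of "rb + real CARD('m) * rb"]
    by (simp add: regret_const_def algebra_simps)
  finally show ?thesis .
qed

lemma regret_le_uniform:
  assumes "N \<le> T \<Longrightarrow> large_horizon"
  shows "(\<integral>\<omega>. hindsight_opt T \<omega> - alg_reward rb ab bb bl 9 T \<omega> \<partial>paths)
    \<le> (regret_const + 4 * real N * rb) * sqrt (real T) * ln (real T) ^ 1"
proof -
  let ?S = "sqrt (real T) * ln (real T)"
  have S: "1 / 2 \<le> ?S"
    using horizon by (intro half_le_sqrt_mult_ln) simp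
  have "(\<integral>\<omega>. hindsight_opt T \<omega> - alg_reward rb ab bb bl 9 T \<omega> \<partial>paths) \<le> regret_const * ?S + 4 * real N * rb * ?S"
  proof (cases "N \<le> T")
    case True
    have "0 \<le> 4 * real N * rb * ?S"
      using S rb_pos by simp
    then show ?thesis
      using regret_le_large_horizon[OF assms[OF True]] by linarith
  next
    case False
    have "2 * real T * rb \<le> 2 * real N * rb"
      using False rb_pos by (intro mult_right_mono) auto
    then have "(\<integral>\<omega>. hindsight_opt T \<omega> - alg_reward rb ab bb bl 9 T \<omega> \<partial>paths) \<le> 2 * real N * rb"
      using regret_le_trivial by linarith
    also have "\<dots> \<le> 4 * real N * rb * ?S"
      using mult_left_mono[OF S, of "4 * real N * rb"] rb_pos by simp
    also have "\<dots> \<le> regret_const * ?S + 4 * real N * rb * ?S"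
      using regret_const_nonneg S by simp
    finally show ?thesis .
  qed
  then show ?thesis
    by (simp add: algebra_simps)
qed

end

theorem theorem1:
  fixes rb ab bb bl :: real
  assumes "rb > 0" "ab > 0" "bb > 0" "bl > 0"
  shows "\<exists>K (k::nat). \<forall>(M :: ('m::finite) sample measure) T.
     bounded_dist M rb ab bb bl \<longrightarrow>
       (\<forall>\<omega>::nat \<Rightarrow> 'm sample. (\<forall>t. \<forall>j. repl (\<omega> t) $ j \<ge> 0) \<longrightarrow>
          (\<forall>t\<in>{1..T}. alg_x rb ab bb bl 9 T \<omega> t \<in> {0, 1}) \<and>
          prefix_feasible T \<omega> (alg_x rb ab bb bl 9 T \<omega>)) \<and>
       (\<forall>t (\<omega>::nat \<Rightarrow> 'm sample) \<omega>'. (\<forall>k\<le>t. \<omega> k = \<omega>' k) \<longrightarrow>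
          alg_x rb ab bb bl 9 T \<omega> t = alg_x rb ab bb bl 9 T \<omega>' t) \<and>
       (T \<ge> 2 \<longrightarrow>
          integrable (PiM UNIV (\<lambda>_::nat. M))
            (\<lambda>\<omega>. hindsight_opt T \<omega> - alg_reward rb ab bb bl 9 T \<omega>) \<and>
          (\<integral>\<omega>. hindsight_opt T \<omega> - alg_reward rb ab bb bl 9 T \<omega> \<partial>PiM UNIV (\<lambda>_::nat. M))
            \<le> K * sqrt T * ln T ^ k)"
proof -
  obtain N where large: "\<And>T. N \<le> T \<Longrightarrow> online_policy.large_horizon TYPE('m) rb ab bb bl T"
    using eventually_large_horizon[OF assms(4)] unfolding eventually_sequentially by blast
  define K where "K = online_policy.regret_const TYPE('m) rb ab bb bl + 4 * real N * rb"
  show ?thesis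
  proof (intro exI[of _ K] exI[of _ "1::nat"] allI impI conjI)
    fix M :: "'m sample measure" and T :: nat
    assume dist: "bounded_dist M rb ab bb bl"
    interpret online_policy rb ab bb bl T "TYPE('m)" .
    show "\<forall>t\<in>{1..T}. dec \<omega> t \<in> {0, 1}" for \<omega>
      using dec_01 by blast
    show "prefix_feasible T \<omega> (dec \<omega>)" if "\<forall>t j. 0 \<le> repl (\<omega> t) $ j" for \<omega>
      using prefix_feasible_dec that by blast
    show "dec \<omega> t = dec \<omega>' t" if "\<forall>k\<le>t. \<omega> k = \<omega>' k" for t \<omega> \<omega>'
      using dec_causal that by blast
    assume "2 \<le> T"
    then interpret iid_policy rb ab bb bl T "TYPE('m)" M
      using assms dist by unfold_locales auto
    show "integrable paths (\<lambda>\<omega>. hindsight_opt T \<omega> - alg_reward rb ab bb bl 9 T \<omega>)"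
      using integrable_hindsight_opt integrable_alg_reward by (rule Bochner_Integration.integrable_diff)
    show "(\<integral>\<omega>. hindsight_opt T \<omega> - alg_reward rb ab bb bl 9 T \<omega> \<partial>paths) \<le> K * sqrt T * ln T ^ 1"
      unfolding K_def using large by (intro regret_le_uniform) auto
  qed
qed

end
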